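(* Let $m\ge n$, let $\bar A\in\mathbb R^{m\times n}$, $\bar{\mathbf b}\in\mathbb R^m$, $\bar{\mathbf c}\in\mathbb R^n$ with $\|\bar A\|,\|\bar{\mathbf b}\|,\|\bar{\mathbf c}\|\le1$, let $0<\sigma^2\le1$, and let $A,\mathbf b,\mathbf c$ be obtained by adding independent $N(0,\sigma^2)$ random variables to every entry of $\bar A,\bar{\mathbf b},\bar{\mathbf c}$. Let $\mathcal F$ be the event that the linear program $\max\mathbf c\mathbf x$ s.t. $A\mathbf x\le\mathbf b$, $\mathbf x\ge0$ is feasible and bounded. Then for every $\epsilon>0$, \[ \Pr\left[\alpha_P(A,\mathbf b,\mathbf c)\le\frac{\epsilon}{(\|A\|+2)^2(\|\mathbf x^*\|+1)}\ \text{and}\ \mathcal F\right]\le\frac{8\epsilon n(m+1)}{\sigma^2}. \]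
   Context: $\|\cdot\|$ is the Euclidean norm for vectors and the spectral norm for matrices. On $\mathcal F$, with probability one the program has a unique optimal solution $\mathbf x^*$ (and a unique dual optimal solution for the dual $\min\mathbf y\mathbf b$, $\mathbf yA\ge\mathbf c$, $\mathbf y\ge0$). $\alpha_P(A,\mathbf b,\mathbf c)=\min_{i: x^*_i>0}x^*_i$. *)

theory Defs
  imports "HOL-Analysis.Analysis" "HOL-Probability.Probability"
begin

definition lp_feasible :: "real^'n^'m \<Rightarrow> real^'m \<Rightarrow> real^'n \<Rightarrow> bool" where
  "lp_feasible A b x \<longleftrightarrow> (\<forall>j. 0 \<le> x $ j) \<and> (\<forall>i. (A *v x) $ i \<le> b $ i)"

definition lp_feasible_bounded :: "real^'n^'m \<Rightarrow> real^'m \<Rightarrow> real^'n \<Rightarrow> bool" where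
  "lp_feasible_bounded A b c \<longleftrightarrow>
     (\<exists>x. lp_feasible A b x) \<and> bdd_above ((\<lambda>x. c \<bullet> x) ` {x. lp_feasible A b x})"

text \<open>The (almost surely unique) optimal solution x*.\<close>
definition lp_opt :: "real^'n^'m \<Rightarrow> real^'m \<Rightarrow> real^'n \<Rightarrow> real^'n" where
  "lp_opt A b c = (THE x. lp_feasible A b x \<and> (\<forall>y. lp_feasible A b y \<longrightarrow> c \<bullet> y \<le> c \<bullet> x))"

definition alpha_P :: "real^'n^'m \<Rightarrow> real^'m \<Rightarrow> real^'n \<Rightarrow> ereal" where
  "alpha_P A b c = (INF j\<in>{j. 0 < lp_opt A b c $ j}. ereal (lp_opt A b c $ j))"

definition spec_norm :: "real^'n^'m \<Rightarrow> real" where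
  "spec_norm A = onorm (\<lambda>x. A *v x)"

text \<open>Distribution of (A,b,c): every entry of (Abar,bbar,cbar) perturbed by an
  independent Gaussian of mean 0 and standard deviation \<sigma> (variance \<sigma>^2).\<close>
definition gauss_perturb ::
  "real^'n^'m \<Rightarrow> real^'m \<Rightarrow> real^'n \<Rightarrow> real \<Rightarrow> ((real^'n^'m) \<times> (real^'m) \<times> (real^'n)) measure" where
  "gauss_perturb Abar bbar cbar \<sigma> =
     density lborel (\<lambda>(A, b, c). ennreal
       ((\<Prod>i\<in>UNIV. \<Prod>j\<in>UNIV. normal_density (Abar $ i $ j) \<sigma> (A $ i $ j)) *
        (\<Prod>i\<in>UNIV. normal_density (bbar $ i) \<sigma> (b $ i)) *
        (\<Prod>j\<in>UNIV. normal_density (cbar $ j) \<sigma> (c $ j))))"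

end

theory Submission
  imports Defs
begin

text \<open>Outside a null set the optimum is the basic solution \<open>x\<close> of an optimal basis: \<open>n\<close> tight,
  linearly independent constraints with a strictly positive dual solution. Indeed, by KKT and conic
  Caratheodory the only alternative is that \<open>c\<close> lies in the span of \<open>n - 1\<close> constraint rows, which
  for fixed \<open>A\<close> confines \<open>c\<close> to finitely many hyperplanes. If \<open>\<alpha>\<^sub>P\<close> is small, some coordinate
  satisfies \<open>0 < x\<^sub>j \<le> \<delta> = \<epsilon> / (\<parallel>a\<^sub>j\<parallel> + 2)\<^sup>2\<close>, where \<open>a\<^sub>j\<close> is the \<open>j\<close>-th column of \<open>A\<close>. Moving \<open>b\<close> along
  \<open>a\<^sub>j\<close> by \<open>d\<close> pushes the \<open>j\<close>-th coordinate of the new optimum above \<open>d\<close>, so for fixed \<open>A\<close> and \<open>c\<close>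
  every line in direction \<open>a\<^sub>j\<close> meets this event in a set of length at most \<open>\<delta>\<close>. Averaging the
  Gaussian density of \<open>b\<close> along these lines against a one-dimensional Gaussian bounds its
  probability by \<open>\<delta> \<parallel>a\<^sub>j\<parallel> \<surd>m / \<sigma> \<le> \<epsilon> \<surd>m / (8 \<sigma>)\<close>; a union bound over \<open>j\<close> finishes the proof.\<close>

section \<open>Isotropic Gaussian measures\<close>

definition isotropic_normal_density :: "'a::euclidean_space \<Rightarrow> real \<Rightarrow> 'a \<Rightarrow> real" where
  "isotropic_normal_density \<mu> \<sigma> x = (\<Prod>u\<in>Basis. normal_density (\<mu> \<bullet> u) \<sigma> (x \<bullet> u))"

definition isotropic_normal :: "'a::euclidean_space \<Rightarrow> real \<Rightarrow> 'a measure" where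
  "isotropic_normal \<mu> \<sigma> = density lborel (\<lambda>x. ennreal (isotropic_normal_density \<mu> \<sigma> x))"

lemma isotropic_normal_density_nonneg [simp]: "0 \<le> isotropic_normal_density \<mu> \<sigma> x"
  by (simp add: isotropic_normal_density_def prod_nonneg)

lemma borel_measurable_isotropic_normal_density [measurable]:
  "isotropic_normal_density \<mu> \<sigma> \<in> borel_measurable borel"
  unfolding isotropic_normal_density_def[abs_def] by measurable

lemma sets_isotropic_normal [simp, measurable_cong]: "sets (isotropic_normal \<mu> \<sigma>) = sets borel"
  by (simp add: isotropic_normal_def)

lemma space_isotropic_normal [simp]: "space (isotropic_normal \<mu> \<sigma>) = UNIV"
  by (simp add: isotropic_normal_def)

lemma isotropic_normal_density_exp:
  "isotropic_normal_density \<mu> \<sigma> (x::'a::euclidean_space) =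
     (1 / sqrt (2 * pi * \<sigma>\<^sup>2)) ^ DIM('a) * exp (- (norm (x - \<mu>))\<^sup>2 / (2 * \<sigma>\<^sup>2))"
proof -
  have "(norm (x - \<mu>))\<^sup>2 = (x - \<mu>) \<bullet> (x - \<mu>)"
    by (rule power2_norm_eq_inner)
  also have "\<dots> = (\<Sum>u\<in>Basis. (x \<bullet> u - \<mu> \<bullet> u)\<^sup>2)"
    by (subst euclidean_inner) (simp add: inner_diff_left power2_eq_square)
  finally have "(\<Prod>u\<in>Basis. exp (- (x \<bullet> u - \<mu> \<bullet> u)\<^sup>2 / (2 * \<sigma>\<^sup>2))) = exp (- (norm (x - \<mu>))\<^sup>2 / (2 * \<sigma>\<^sup>2))"
    by (simp add: exp_sum[symmetric] sum_divide_distrib sum_negf)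
  then show ?thesis
    unfolding isotropic_normal_density_def normal_density_def prod.distrib by simp
qed

lemma isotropic_normal_density_real [simp]:
  "isotropic_normal_density (\<mu>::real) \<sigma> x = normal_density \<mu> \<sigma> x"
  by (simp add: isotropic_normal_density_def)

lemma isotropic_normal_density_Pair:
  "isotropic_normal_density (\<mu>, \<nu>) \<sigma> p =
     isotropic_normal_density \<mu> \<sigma> (fst p) * isotropic_normal_density \<nu> \<sigma> (snd p)"
proof -
  have inj: "inj_on (\<lambda>u. (u, 0)) Basis" "inj_on (\<lambda>v. (0, v)) Basis"
    by (auto intro: inj_onI)
  show ?thesis
    unfolding isotropic_normal_density_def Basis_prod_def
    by (subst prod.union_disjoint) (auto simp: prod.reindex[OF inj(1)] prod.reindex[OF inj(2)] inner_Pair_0)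
qed

lemma isotropic_normal_density_vec:
  "isotropic_normal_density (\<mu>::'a::euclidean_space^'k) \<sigma> x =
     (\<Prod>i\<in>UNIV. isotropic_normal_density (\<mu> $ i) \<sigma> (x $ i))"
proof -
  have inj: "inj_on (\<lambda>(i, u). axis i u) (UNIV \<times> (Basis :: 'a set))"
    by (auto intro!: inj_onI simp: axis_eq_axis nonzero_Basis)
  have Basis_eq: "(Basis :: ('a^'k) set) = (\<lambda>(i, u). axis i u) ` (UNIV \<times> Basis)"
    by (auto simp: Basis_vec_def)
  show ?thesis
    unfolding isotropic_normal_density_def Basis_eq prod.reindex[OF inj]
    by (simp add: prod.cartesian_product inner_axis split_beta')
qed

lemma prob_space_isotropic_normal:
  assumes "0 < \<sigma>"
  shows "prob_space (isotropic_normal \<mu> \<sigma>)"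
proof
  have "(\<integral>\<^sup>+t. ennreal (normal_density m \<sigma> t) \<partial>lborel) = 1" for m
    using assms by (subst nn_integral_eq_integral) auto
  then show "emeasure (isotropic_normal \<mu> \<sigma>) (space (isotropic_normal \<mu> \<sigma>)) = 1"
    unfolding isotropic_normal_def isotropic_normal_density_def
    by (simp add: emeasure_density prod_ennreal[symmetric])
      (subst nn_integral_lborel_prod, auto)
qed

lemma emeasure_isotropic_normal_null:
  assumes "N \<in> null_sets lborel"
  shows "emeasure (isotropic_normal \<mu> \<sigma>) N = 0"
proof -
  have "emeasure (isotropic_normal \<mu> \<sigma>) N = (\<integral>\<^sup>+x. ennreal (isotropic_normal_density \<mu> \<sigma> x) * indicator N x \<partial>lborel)"
    unfolding isotropic_normal_def using null_setsD2[OF assms] by (rule emeasure_density[rotated]) measurable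
  also have "\<dots> = 0"
    using assms by (rule nn_integral_null_set)
  finally show ?thesis .
qed

lemma isotropic_normal_Pair:
  assumes "0 < \<sigma>"
  shows "isotropic_normal (\<mu>, \<nu>) \<sigma> = isotropic_normal \<mu> \<sigma> \<Otimes>\<^sub>M isotropic_normal \<nu> \<sigma>"
proof -
  interpret \<nu>: prob_space "isotropic_normal \<nu> \<sigma>"
    using assms by (rule prob_space_isotropic_normal)
  have "isotropic_normal \<mu> \<sigma> \<Otimes>\<^sub>M isotropic_normal \<nu> \<sigma> =
      density (lborel \<Otimes>\<^sub>M lborel) (\<lambda>(x, y). ennreal (isotropic_normal_density \<mu> \<sigma> x) * ennreal (isotropic_normal_density \<nu> \<sigma> y))"
    unfolding isotropic_normal_def
    by (rule pair_measure_density) (auto simp: isotropic_normal_def[symmetric] \<nu>.sigma_finite_measure_axioms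
        lborel.sigma_finite_measure_axioms)
  then show ?thesis
    by (simp add: isotropic_normal_def lborel_prod split_beta' isotropic_normal_density_Pair ennreal_mult)
qed

lemma gauss_perturb_eq_isotropic_normal:
  "gauss_perturb Abar bbar cbar \<sigma> = isotropic_normal (Abar, bbar, cbar) \<sigma>"
  unfolding gauss_perturb_def isotropic_normal_def
  by (intro arg_cong[where f = "density lborel"] ext)
    (clarsimp simp: isotropic_normal_density_Pair isotropic_normal_density_vec mult.assoc)

lemma norm_power2_div_le_shift:
  fixes w v :: "'a::real_normed_vector"
  assumes "0 < t"
  shows "(norm w)\<^sup>2 / (1 + t) \<le> (norm (w + s *\<^sub>R v))\<^sup>2 + s\<^sup>2 * (norm v)\<^sup>2 / t"
proof -
  define \<alpha> where "\<alpha> = norm (w + s *\<^sub>R v)"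
  define \<beta> where "\<beta> = \<bar>s\<bar> * norm v"
  have "norm w \<le> \<alpha> + \<beta>"
    unfolding \<alpha>_def \<beta>_def using norm_triangle_ineq4[of "w + s *\<^sub>R v" "s *\<^sub>R v"] by simp
  then have "(norm w)\<^sup>2 \<le> (\<alpha> + \<beta>)\<^sup>2"
    by (intro power_mono) auto
  also have "\<dots> \<le> (1 + t) * \<alpha>\<^sup>2 + (1 + 1 / t) * \<beta>\<^sup>2"
  proof -
    have "2 * \<alpha> * \<beta> * t \<le> t\<^sup>2 * \<alpha>\<^sup>2 + \<beta>\<^sup>2"
      using zero_le_power2[of "t * \<alpha> - \<beta>"] by (simp add: power2_eq_square algebra_simps)
    then show ?thesis
      using assms by (simp add: power2_eq_square field_simps)
  qed
  finally have "(norm w)\<^sup>2 / (1 + t) \<le> \<alpha>\<^sup>2 + \<beta>\<^sup>2 / t"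
    using assms by (simp add: field_simps)
  then show ?thesis
    unfolding \<alpha>_def \<beta>_def by (simp add: power_mult_distrib)
qed

lemma one_plus_inverse_power_le_2pi: "(1 + 1 / real n) ^ n \<le> 2 * pi"
proof -
  have "(1 + 1 / real n) ^ n \<le> exp 1"
    using exp_ge_one_plus_x_over_n_power_n[of n 1] by (cases "n = 0") auto
  also have "\<dots> \<le> 2 * pi"
    using exp_le pi_gt3 by linarith
  finally show ?thesis .
qed

lemma normal_density_width_factor_le:
  fixes v :: "'a::real_normed_vector"
  assumes "0 < \<sigma>" and "v \<noteq> 0" and "0 < n" and "(1 + 1 / n) ^ k \<le> 2 * pi"
  shows "1 / sqrt (2 * pi * (\<sigma> / (norm v * sqrt n))\<^sup>2) * sqrt ((1 + 1 / n) ^ k) \<le> norm v * sqrt n / \<sigma>"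
proof -
  have "1 / sqrt (2 * pi * (\<sigma> / (norm v * sqrt n))\<^sup>2) = norm v * sqrt n / \<sigma> / sqrt (2 * pi)"
    using assms by (simp add: real_sqrt_mult real_sqrt_divide power_divide power_mult_distrib)
  then have "1 / sqrt (2 * pi * (\<sigma> / (norm v * sqrt n))\<^sup>2) * sqrt ((1 + 1 / n) ^ k)
      = norm v * sqrt n / \<sigma> * (sqrt ((1 + 1 / n) ^ k) / sqrt (2 * pi))"
    by simp
  also have "\<dots> \<le> norm v * sqrt n / \<sigma> * 1"
    using assms by (intro mult_left_mono) simp_all
  finally show ?thesis
    by simp
qed

text \<open>The pointwise estimate behind the line-section bound: weighting the Gaussian at \<open>b + s v\<close>
  by a one-dimensional Gaussian in \<open>s\<close> of width \<open>\<sigma> / (\<parallel>v\<parallel> \<surd>n)\<close> (with \<open>n = DIM('a)\<close>) costs the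
  factor \<open>\<parallel>v\<parallel> \<surd>n / \<sigma>\<close> and a widening of the Gaussian at \<open>b\<close> by \<open>\<surd>(1 + 1/n)\<close>, whose
  normalising constant grows by \<open>(1 + 1/n)\<^bsup>n/2\<^esup> < \<surd>(2\<pi>)\<close>.\<close>

lemma normal_density_line_le_isotropic_normal_density:
  fixes b \<mu> v :: "'a::euclidean_space"
  assumes "0 < \<sigma>" and "v \<noteq> 0"
  shows "normal_density 0 (\<sigma> / (norm v * sqrt DIM('a))) s * isotropic_normal_density \<mu> \<sigma> (b + s *\<^sub>R v)
    \<le> norm v * sqrt DIM('a) / \<sigma> * isotropic_normal_density \<mu> (\<sigma> * sqrt (1 + 1 / DIM('a))) b"
proof -
  define N where "N = real DIM('a)"
  define t where "t = 1 / N"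
  define \<tau> where "\<tau> = \<sigma> / (norm v * sqrt N)"
  define w where "w = b - \<mu>"
  define K where "K = 1 / sqrt (2 * pi * \<sigma>\<^sup>2)"
  have N: "0 < N" and t: "0 < t" and nv: "0 < norm v"
    using assms by (auto simp: N_def t_def)
  have \<tau>2: "\<tau>\<^sup>2 = \<sigma>\<^sup>2 * t / (norm v)\<^sup>2"
    using N by (simp add: \<tau>_def t_def power_divide power_mult_distrib)
  have exponent: "- s\<^sup>2 / (2 * \<tau>\<^sup>2) - (norm (w + s *\<^sub>R v))\<^sup>2 / (2 * \<sigma>\<^sup>2) \<le> - (norm w)\<^sup>2 / (2 * \<sigma>\<^sup>2 * (1 + t))"
  proof -
    have "(norm w)\<^sup>2 / (1 + t) / (2 * \<sigma>\<^sup>2) \<le> ((norm (w + s *\<^sub>R v))\<^sup>2 + s\<^sup>2 * (norm v)\<^sup>2 / t) / (2 * \<sigma>\<^sup>2)"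
      using norm_power2_div_le_shift[OF t] assms by (intro divide_right_mono) auto
    moreover have "s\<^sup>2 * (norm v)\<^sup>2 / t / (2 * \<sigma>\<^sup>2) = s\<^sup>2 / (2 * \<tau>\<^sup>2)"
      unfolding \<tau>2 using t nv assms by (simp add: field_simps)
    ultimately show ?thesis
      by (simp add: field_simps add_divide_distrib)
  qed
  have wide: "isotropic_normal_density \<mu> (\<sigma> * sqrt (1 + t)) b
      = (K / sqrt (1 + t)) ^ DIM('a) * exp (- (norm w)\<^sup>2 / (2 * \<sigma>\<^sup>2 * (1 + t)))"
    using t by (simp add: isotropic_normal_density_exp K_def w_def power_mult_distrib real_sqrt_mult mult_ac)
  have "normal_density 0 \<tau> s * isotropic_normal_density \<mu> \<sigma> (b + s *\<^sub>R v)
      = 1 / sqrt (2 * pi * \<tau>\<^sup>2) * K ^ DIM('a) * exp (- s\<^sup>2 / (2 * \<tau>\<^sup>2) - (norm (w + s *\<^sub>R v))\<^sup>2 / (2 * \<sigma>\<^sup>2))"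
    by (simp add: isotropic_normal_density_exp normal_density_def K_def w_def mult_exp_exp algebra_simps)
  also have "\<dots> \<le> 1 / sqrt (2 * pi * \<tau>\<^sup>2) * K ^ DIM('a) * exp (- (norm w)\<^sup>2 / (2 * \<sigma>\<^sup>2 * (1 + t)))"
    using exponent by (intro mult_left_mono) (auto simp: K_def)
  also have "\<dots> = 1 / sqrt (2 * pi * \<tau>\<^sup>2) * sqrt ((1 + t) ^ DIM('a)) * isotropic_normal_density \<mu> (\<sigma> * sqrt (1 + t)) b"
    using t by (simp add: wide power_divide real_sqrt_power)
  also have "\<dots> \<le> norm v * sqrt N / \<sigma> * isotropic_normal_density \<mu> (\<sigma> * sqrt (1 + t)) b"
    using normal_density_width_factor_le[of \<sigma> v "real DIM('a)" "DIM('a)"] assms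
      one_plus_inverse_power_le_2pi[of "DIM('a)"]
    by (intro mult_right_mono) (simp_all add: \<tau>_def t_def N_def)
  finally show ?thesis
    by (simp add: \<tau>_def t_def N_def)
qed

lemma nn_integral_lborel_average_translates:
  fixes F :: "'a::euclidean_space \<Rightarrow> ennreal" and \<psi> :: "real \<Rightarrow> ennreal"
  assumes [measurable]: "F \<in> borel_measurable borel" "\<psi> \<in> borel_measurable borel"
    and \<psi>: "(\<integral>\<^sup>+s. \<psi> s \<partial>lborel) = 1"
  shows "(\<integral>\<^sup>+b. F b \<partial>lborel) = (\<integral>\<^sup>+b. \<integral>\<^sup>+s. \<psi> s * F (b + s *\<^sub>R v) \<partial>lborel \<partial>lborel)"
proof -
  have translate: "(\<integral>\<^sup>+b. F b \<partial>lborel) = (\<integral>\<^sup>+b. F (b + s *\<^sub>R v) \<partial>lborel)" for s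
  proof -
    have "(\<integral>\<^sup>+b. F b \<partial>lborel) = (\<integral>\<^sup>+b. F b \<partial>distr lborel borel ((+) (s *\<^sub>R v)))"
      by (simp add: lborel_distr_plus)
    also have "\<dots> = (\<integral>\<^sup>+b. F (b + s *\<^sub>R v) \<partial>lborel)"
      by (subst nn_integral_distr) (auto simp: add.commute)
    finally show ?thesis .
  qed
  have "(\<integral>\<^sup>+b. F b \<partial>lborel) = (\<integral>\<^sup>+s. \<psi> s * (\<integral>\<^sup>+b. F b \<partial>lborel) \<partial>lborel)"
    using \<psi> by (simp add: nn_integral_multc)
  also have "\<dots> = (\<integral>\<^sup>+s. \<integral>\<^sup>+b. \<psi> s * F (b + s *\<^sub>R v) \<partial>lborel \<partial>lborel)"
    by (intro nn_integral_cong) (simp add: translate[symmetric] nn_integral_cmult)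
  also have "\<dots> = (\<integral>\<^sup>+b. \<integral>\<^sup>+s. \<psi> s * F (b + s *\<^sub>R v) \<partial>lborel \<partial>lborel)"
    by (rule pair_sigma_finite.Fubini'[OF lborel_pair.pair_sigma_finite_axioms]) measurable
  finally show ?thesis .
qed

lemma emeasure_isotropic_normal_le_line_sections:
  fixes v :: "'a::euclidean_space" and E :: "'a set"
  assumes \<sigma>: "0 < \<sigma>" and v: "v \<noteq> 0" and [measurable]: "E \<in> sets borel" and "0 \<le> L"
    and sections: "\<And>b. emeasure lborel {s. b + s *\<^sub>R v \<in> E} \<le> ennreal L"
  shows "emeasure (isotropic_normal \<mu> \<sigma>) E \<le> ennreal (L * norm v * sqrt DIM('a) / \<sigma>)"
proof -
  define \<tau> where "\<tau> = \<sigma> / (norm v * sqrt DIM('a))"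
  define \<sigma>' where "\<sigma>' = \<sigma> * sqrt (1 + 1 / DIM('a))"
  define C where "C = norm v * sqrt DIM('a) / \<sigma>"
  have "0 < \<tau>" "0 < \<sigma>'" "0 \<le> C"
    using \<sigma> v by (auto simp: \<tau>_def \<sigma>'_def C_def add_pos_pos)
  have "emeasure (isotropic_normal \<mu> \<sigma>) E = (\<integral>\<^sup>+b. ennreal (isotropic_normal_density \<mu> \<sigma> b) * indicator E b \<partial>lborel)"
    unfolding isotropic_normal_def by (simp add: emeasure_density)
  also have "\<dots> = (\<integral>\<^sup>+b. \<integral>\<^sup>+s. normal_density 0 \<tau> s *
      (ennreal (isotropic_normal_density \<mu> \<sigma> (b + s *\<^sub>R v)) * indicator E (b + s *\<^sub>R v)) \<partial>lborel \<partial>lborel)"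
    using \<open>0 < \<tau>\<close> by (intro nn_integral_lborel_average_translates) (auto simp: nn_integral_eq_integral)
  also have "\<dots> \<le> (\<integral>\<^sup>+b. \<integral>\<^sup>+s. ennreal (C * isotropic_normal_density \<mu> \<sigma>' b) * indicator {s. b + s *\<^sub>R v \<in> E} s \<partial>lborel \<partial>lborel)"
    using normal_density_line_le_isotropic_normal_density[OF \<sigma> v]
    by (intro nn_integral_mono) (auto simp: \<tau>_def \<sigma>'_def C_def indicator_def ennreal_mult'[symmetric] ennreal_leI)
  also have "\<dots> = (\<integral>\<^sup>+b. ennreal (C * isotropic_normal_density \<mu> \<sigma>' b) * emeasure lborel {s. b + s *\<^sub>R v \<in> E} \<partial>lborel)"
    by (intro nn_integral_cong nn_integral_cmult_indicator) measurable
  also have "\<dots> \<le> (\<integral>\<^sup>+b. ennreal (isotropic_normal_density \<mu> \<sigma>' b) * ennreal (C * L) \<partial>lborel)"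
  proof (intro nn_integral_mono)
    fix b
    have "ennreal (C * isotropic_normal_density \<mu> \<sigma>' b) * emeasure lborel {s. b + s *\<^sub>R v \<in> E}
        \<le> ennreal (C * isotropic_normal_density \<mu> \<sigma>' b) * ennreal L"
      by (intro mult_left_mono sections) auto
    also have "\<dots> = ennreal (isotropic_normal_density \<mu> \<sigma>' b) * ennreal (C * L)"
      using \<open>0 \<le> C\<close> \<open>0 \<le> L\<close> by (simp add: ennreal_mult'[symmetric] mult_ac)
    finally show "ennreal (C * isotropic_normal_density \<mu> \<sigma>' b) * emeasure lborel {s. b + s *\<^sub>R v \<in> E}
        \<le> ennreal (isotropic_normal_density \<mu> \<sigma>' b) * ennreal (C * L)" .
  qed
  also have "\<dots> = emeasure (isotropic_normal \<mu> \<sigma>') UNIV * ennreal (C * L)"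
    unfolding isotropic_normal_def by (simp add: emeasure_density nn_integral_multc)
  also have "\<dots> = ennreal (L * norm v * sqrt DIM('a) / \<sigma>)"
    using prob_space.emeasure_space_1[OF prob_space_isotropic_normal[OF \<open>0 < \<sigma>'\<close>, of \<mu>]]
    by (simp add: C_def mult_ac)
  finally show ?thesis .
qed

section \<open>Optima of linear programs\<close>

definition lp_optimal :: "real^'n^'m \<Rightarrow> real^'m \<Rightarrow> real^'n \<Rightarrow> real^'n \<Rightarrow> bool" where
  "lp_optimal A b c x \<longleftrightarrow> lp_feasible A b x \<and> (\<forall>y. lp_feasible A b y \<longrightarrow> c \<bullet> y \<le> c \<bullet> x)"

definition lp_unique_optimal :: "real^'n^'m \<Rightarrow> real^'m \<Rightarrow> real^'n \<Rightarrow> real^'n \<Rightarrow> bool" where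
  "lp_unique_optimal A b c x \<longleftrightarrow> lp_feasible A b x \<and> (\<forall>y. lp_feasible A b y \<longrightarrow> y \<noteq> x \<longrightarrow> c \<bullet> y < c \<bullet> x)"

lemma lp_unique_optimal_imp_optimal: "lp_unique_optimal A b c x \<Longrightarrow> lp_optimal A b c x"
  unfolding lp_unique_optimal_def lp_optimal_def by (metis order.order_iff_strict)

lemma lp_opt_eqI:
  assumes "lp_unique_optimal A b c x"
  shows "lp_opt A b c = x"
  unfolding lp_opt_def
proof (rule the_equality)
  show "lp_feasible A b x \<and> (\<forall>y. lp_feasible A b y \<longrightarrow> c \<bullet> y \<le> c \<bullet> x)"
    using lp_unique_optimal_imp_optimal[OF assms] unfolding lp_optimal_def .
  show "y = x" if "lp_feasible A b y \<and> (\<forall>y'. lp_feasible A b y' \<longrightarrow> c \<bullet> y' \<le> c \<bullet> y)" for y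
    using assms that unfolding lp_unique_optimal_def by (meson not_less)
qed

lemma convex_cone_sum:
  assumes "convex_cone K" and "\<And>i. i \<in> I \<Longrightarrow> f i \<in> K"
  shows "(\<Sum>i\<in>I. f i) \<in> K"
  using assms(2)
proof (induction I rule: infinite_finite_induct)
  case (insert i I)
  then show ?case using assms(1) by (simp add: convex_cone_add)
qed (use assms(1) convex_cone_contains_0 in auto)

lemma nonneg_orthant_eq_convex_cone_hull_Basis:
  "{x::'a::euclidean_space. \<forall>i\<in>Basis. 0 \<le> x \<bullet> i} = convex_cone hull Basis"
proof
  show "{x::'a. \<forall>i\<in>Basis. 0 \<le> x \<bullet> i} \<subseteq> convex_cone hull Basis"
  proof
    fix x :: 'a assume "x \<in> {x. \<forall>i\<in>Basis. 0 \<le> x \<bullet> i}"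
    then have "(\<Sum>i\<in>Basis. (x \<bullet> i) *\<^sub>R i) \<in> convex_cone hull Basis"
      by (intro convex_cone_sum convex_cone_convex_cone_hull convex_cone_scaleR hull_inc) auto
    then show "x \<in> convex_cone hull Basis"
      by (simp add: euclidean_representation)
  qed
  show "convex_cone hull Basis \<subseteq> {x::'a. \<forall>i\<in>Basis. 0 \<le> x \<bullet> i}"
    by (rule hull_minimal) (auto simp: convex_cone_iff inner_Basis inner_add_left)
qed

lemma closed_linear_image_nonneg_orthant:
  fixes f :: "'a::euclidean_space \<Rightarrow> 'b::euclidean_space"
  assumes "linear f"
  shows "closed (f ` {x. \<forall>i\<in>Basis. 0 \<le> x \<bullet> i})"
  unfolding nonneg_orthant_eq_convex_cone_hull_Basis convex_cone_hull_linear_image[OF assms, symmetric]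
  by (simp add: closed_convex_cone_hull)

lemma nonneg_Basis_vec_iff: "(\<forall>i\<in>Basis. 0 \<le> x \<bullet> i) \<longleftrightarrow> (\<forall>j. 0 \<le> (x::real^'n) $ j)"
  by (auto simp: Basis_vec_def inner_axis)

lemma lp_optimal_exists:
  fixes A :: "real^'n^'m"
  assumes "lp_feasible_bounded A b c"
  shows "\<exists>x. lp_optimal A b c x"
proof -
  define f where "f p = (A *v fst p + snd p, c \<bullet> fst p)" for p :: "(real^'n) \<times> (real^'m)"
  have "linear f"
    unfolding f_def by (intro linearI) (auto simp: matrix_vector_right_distrib matrix_vector_mult_scaleR scaleR_add_right inner_add_right)
  then have "closed (f ` {p. \<forall>i\<in>Basis. 0 \<le> p \<bullet> i})"
    by (rule closed_linear_image_nonneg_orthant)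
  then have "closed ((\<lambda>r. (b, r)) -` f ` {p. \<forall>i\<in>Basis. 0 \<le> p \<bullet> i})"
    by (rule continuous_closed_vimage) (intro continuous_intros)
  moreover have "(\<lambda>r. (b, r)) -` f ` {p. \<forall>i\<in>Basis. 0 \<le> p \<bullet> i} = (\<lambda>x. c \<bullet> x) ` {x. lp_feasible A b x}"
  proof -
    have orthant: "(\<forall>i\<in>Basis. 0 \<le> p \<bullet> i) \<longleftrightarrow> (\<forall>j. 0 \<le> fst p $ j) \<and> (\<forall>i. 0 \<le> snd p $ i)"
      for p :: "(real^'n) \<times> (real^'m)"
      by (simp add: Basis_prod_def ball_Un inner_Pair_0 nonneg_Basis_vec_iff)
    have "f (x, b - A *v x) = (b, c \<bullet> x)" for x
      by (simp add: f_def)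
    then have "c \<bullet> x \<in> (\<lambda>r. (b, r)) -` f ` {p. \<forall>i\<in>Basis. 0 \<le> p \<bullet> i}" if "lp_feasible A b x" for x
      using that orthant[of "(x, b - A *v x)"] unfolding lp_feasible_def by (force simp: image_iff)
    then show ?thesis
      by (auto simp: f_def lp_feasible_def orthant)
  qed
  ultimately have closed: "closed ((\<lambda>x. c \<bullet> x) ` {x. lp_feasible A b x})"
    by simp
  have nonempty: "(\<lambda>x. c \<bullet> x) ` {x. lp_feasible A b x} \<noteq> {}" and bdd: "bdd_above ((\<lambda>x. c \<bullet> x) ` {x. lp_feasible A b x})"
    using assms unfolding lp_feasible_bounded_def by auto
  obtain x where "lp_feasible A b x" "c \<bullet> x = Sup ((\<lambda>x. c \<bullet> x) ` {x. lp_feasible A b x})"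
    using closed_contains_Sup[OF nonempty bdd closed] by auto
  then show ?thesis
    using cSup_upper[OF _ bdd] unfolding lp_optimal_def by auto
qed

lemma farkas_convex_cone_hull:
  fixes S :: "'a::euclidean_space set"
  assumes "finite S" and "c \<notin> convex_cone hull S"
  shows "\<exists>d. 0 < c \<bullet> d \<and> (\<forall>v\<in>S. v \<bullet> d \<le> 0)"
proof -
  obtain a \<beta> where sep: "a \<bullet> c < \<beta>" "\<forall>x\<in>convex_cone hull S. \<beta> < a \<bullet> x"
    using separating_hyperplane_closed_point[OF convex_convex_cone_hull closed_convex_cone_hull[OF assms(1)] assms(2)]
    by blast
  then have "\<beta> < 0"
    using convex_cone_hull_contains_0 by fastforce
  have "0 \<le> a \<bullet> v" if "v \<in> S" for v
  proof (rule ccontr)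
    assume "\<not> 0 \<le> a \<bullet> v"
    then have "(\<beta> / (a \<bullet> v)) *\<^sub>R v \<in> convex_cone hull S"
      using \<open>\<beta> < 0\<close> \<open>v \<in> S\<close>
      by (intro convex_cone_scaleR[OF convex_cone_convex_cone_hull] hull_inc) (auto simp: divide_nonpos_neg)
    with sep(2) \<open>\<not> 0 \<le> a \<bullet> v\<close> show False
      by fastforce
  qed
  then show ?thesis
    using sep(1) \<open>\<beta> < 0\<close> by (intro exI[of _ "- a"]) (auto simp: inner_commute)
qed

lemma polyhedron_feasible_direction:
  fixes g :: "'t::finite \<Rightarrow> 'a::real_inner"
  assumes feasible: "\<forall>t. g t \<bullet> z \<le> h t" and tight: "\<And>t. g t \<bullet> z = h t \<Longrightarrow> g t \<bullet> d \<le> 0"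
  shows "\<exists>\<eta>>0. \<forall>t. g t \<bullet> (z + \<eta> *\<^sub>R d) \<le> h t"
proof -
  define slack where "slack t = h t - g t \<bullet> z" for t
  define \<eta> where "\<eta> = Min (insert 1 ((\<lambda>t. slack t / (\<bar>g t \<bullet> d\<bar> + 1)) ` {t. g t \<bullet> z \<noteq> h t}))"
  have slack: "0 < slack t" if "g t \<bullet> z \<noteq> h t" for t
    using feasible that by (auto simp: slack_def order_less_le)
  have "0 < \<eta>"
    unfolding \<eta>_def using slack by (subst Min_gr_iff) auto
  moreover have "g t \<bullet> (z + \<eta> *\<^sub>R d) \<le> h t" for t
  proof (cases "g t \<bullet> z = h t")
    case True
    then show ?thesis
      using tight[OF True] \<open>0 < \<eta>\<close> by (simp add: inner_add_right mult_nonneg_nonpos)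
  next
    case False
    have "\<eta> \<le> slack t / (\<bar>g t \<bullet> d\<bar> + 1)"
      unfolding \<eta>_def using False by (intro Min_le) auto
    then have "\<eta> * (\<bar>g t \<bullet> d\<bar> + 1) \<le> slack t"
      by (simp add: le_divide_eq add_pos_nonneg)
    moreover have "\<eta> * (g t \<bullet> d) \<le> \<eta> * (\<bar>g t \<bullet> d\<bar> + 1)"
      using \<open>0 < \<eta>\<close> by (intro mult_left_mono) auto
    ultimately show ?thesis
      by (simp add: inner_add_right slack_def)
  qed
  ultimately show ?thesis
    by blast
qed

lemma polyhedron_max_imp_convex_cone_hull_tight:
  fixes g :: "'t::finite \<Rightarrow> 'a::euclidean_space"
  assumes feasible: "\<forall>t. g t \<bullet> z \<le> h t" and max: "\<And>x. \<forall>t. g t \<bullet> x \<le> h t \<Longrightarrow> c \<bullet> x \<le> c \<bullet> z"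
  shows "c \<in> convex_cone hull (g ` {t. g t \<bullet> z = h t})"
proof (rule ccontr)
  assume "c \<notin> convex_cone hull (g ` {t. g t \<bullet> z = h t})"
  then obtain d where d: "0 < c \<bullet> d" "\<And>t. g t \<bullet> z = h t \<Longrightarrow> g t \<bullet> d \<le> 0"
    using farkas_convex_cone_hull[of "g ` {t. g t \<bullet> z = h t}" c] by auto
  obtain \<eta> where "0 < \<eta>" "\<forall>t. g t \<bullet> (z + \<eta> *\<^sub>R d) \<le> h t"
    using polyhedron_feasible_direction[OF feasible d(2)] by blast
  then have "c \<bullet> (z + \<eta> *\<^sub>R d) \<le> c \<bullet> z"
    by (intro max)
  with mult_pos_pos[OF \<open>0 < \<eta>\<close> d(1)] show False
    by (simp add: inner_add_right)
qed

lemma convex_cone_hull_finite: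
  fixes S :: "'a::real_vector set"
  assumes "finite S"
  shows "convex_cone hull S = {\<Sum>v\<in>S. \<mu> v *\<^sub>R v | \<mu>. \<forall>v\<in>S. 0 \<le> \<mu> v}" (is "_ = ?C")
proof
  have "convex_cone ?C"
    unfolding convex_cone_iff
  proof (intro conjI ballI allI impI)
    show "0 \<in> ?C"
      by (auto intro!: exI[of _ "\<lambda>_. 0"])
  next
    fix x y assume "x \<in> ?C" "y \<in> ?C"
    then obtain \<mu> \<nu> where "x = (\<Sum>v\<in>S. \<mu> v *\<^sub>R v)" "\<forall>v\<in>S. 0 \<le> \<mu> v"
      and "y = (\<Sum>v\<in>S. \<nu> v *\<^sub>R v)" "\<forall>v\<in>S. 0 \<le> \<nu> v"
      by blast
    then show "x + y \<in> ?C"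
      by (intro CollectI exI[of _ "\<lambda>v. \<mu> v + \<nu> v"]) (auto simp: sum.distrib scaleR_add_left)
  next
    fix x and r :: real assume "x \<in> ?C" "0 \<le> r"
    then obtain \<mu> where "x = (\<Sum>v\<in>S. \<mu> v *\<^sub>R v)" "\<forall>v\<in>S. 0 \<le> \<mu> v"
      by blast
    with \<open>0 \<le> r\<close> show "r *\<^sub>R x \<in> ?C"
      by (intro CollectI exI[of _ "\<lambda>v. r * \<mu> v"]) (auto simp: scaleR_sum_right)
  qed
  moreover have "S \<subseteq> ?C"
  proof
    fix u assume "u \<in> S"
    then have "u = (\<Sum>v\<in>S. (if v = u then 1 else 0) *\<^sub>R v)"
      using assms by (simp add: if_distrib[of "\<lambda>r. r *\<^sub>R _"] cong: if_cong)
    then show "u \<in> ?C"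
      by (intro CollectI exI[of _ "\<lambda>v. if v = u then 1 else 0"]) auto
  qed
  ultimately show "convex_cone hull S \<subseteq> ?C"
    by (rule hull_minimal[rotated])
  show "?C \<subseteq> convex_cone hull S"
    by (clarify, intro convex_cone_sum[OF convex_cone_convex_cone_hull]
        convex_cone_scaleR[OF convex_cone_convex_cone_hull] hull_inc) auto
qed

lemma sum_scaleR_restrict_pos:
  fixes S :: "'a::real_vector set"
  assumes "finite S" and "\<forall>v\<in>S. 0 \<le> \<mu> v"
  shows "(\<Sum>v\<in>S. \<mu> v *\<^sub>R v) = (\<Sum>v\<in>{v\<in>S. 0 < \<mu> v}. \<mu> v *\<^sub>R v)"
proof (intro sum.mono_neutral_right ballI)
  fix v assume "v \<in> S - {v\<in>S. 0 < \<mu> v}"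
  with assms(2) have "\<mu> v = 0"
    by auto
  then show "\<mu> v *\<^sub>R v = 0"
    by simp
qed (use assms(1) in auto)

text \<open>One step of the conic Caratheodory argument: subtract the largest multiple of a linear
  dependence that keeps all coefficients nonnegative; at least one of them vanishes.\<close>

lemma positive_combination_dependent_shrink:
  fixes S :: "'a::real_vector set"
  assumes "finite S" and "dependent S" and pos: "\<forall>v\<in>S. 0 < \<mu> v" and c: "c = (\<Sum>v\<in>S. \<mu> v *\<^sub>R v)"
  shows "\<exists>S'\<subset>S. \<exists>\<mu>'. (\<forall>v\<in>S'. 0 < \<mu>' v) \<and> c = (\<Sum>v\<in>S'. \<mu>' v *\<^sub>R v)"
proof -
  obtain u v0 where u: "(\<Sum>v\<in>S. u v *\<^sub>R v) = 0" and "v0 \<in> S" "0 < u v0"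
  proof -
    obtain u v0 where "(\<Sum>v\<in>S. u v *\<^sub>R v) = 0" "v0 \<in> S" "u v0 \<noteq> 0"
      using assms(2) dependent_finite[OF assms(1)] by auto
    then show thesis
      by (cases "0 < u v0") (auto intro: that[of u v0] that[of "\<lambda>v. - u v" v0] simp: sum_negf)
  qed
  define P where "P = {v\<in>S. 0 < u v}"
  define \<theta> where "\<theta> = Min ((\<lambda>v. \<mu> v / u v) ` P)"
  have "finite P" "v0 \<in> P"
    using assms(1) \<open>v0 \<in> S\<close> \<open>0 < u v0\<close> by (auto simp: P_def)
  then have "\<theta> \<in> (\<lambda>v. \<mu> v / u v) ` P"
    unfolding \<theta>_def by (intro Min_in) auto
  then obtain v1 where "v1 \<in> P" "\<theta> = \<mu> v1 / u v1"
    by blast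
  have "0 \<le> \<theta>"
    using \<open>v1 \<in> P\<close> pos unfolding \<open>\<theta> = \<mu> v1 / u v1\<close> P_def by (auto intro: divide_nonneg_pos)
  define \<mu>' where "\<mu>' v = \<mu> v - \<theta> * u v" for v
  have nonneg: "0 \<le> \<mu>' v" if "v \<in> S" for v
  proof (cases "0 < u v")
    case True
    then have "\<theta> \<le> \<mu> v / u v"
      unfolding \<theta>_def using \<open>finite P\<close> that by (intro Min_le) (auto simp: P_def)
    with True show ?thesis
      by (simp add: \<mu>'_def le_divide_eq)
  next
    case False
    then have "\<theta> * u v \<le> 0"
      using \<open>0 \<le> \<theta>\<close> by (simp add: mult_nonneg_nonpos)
    moreover have "0 < \<mu> v"
      using pos that by blast
    ultimately show ?thesis
      by (simp add: \<mu>'_def)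
  qed
  define S' where "S' = {v\<in>S. 0 < \<mu>' v}"
  have "v1 \<notin> S'" "v1 \<in> S"
    using \<open>v1 \<in> P\<close> \<open>\<theta> = \<mu> v1 / u v1\<close> by (auto simp: S'_def P_def \<mu>'_def)
  then have "S' \<subset> S"
    by (auto simp: S'_def)
  have "(\<Sum>v\<in>S. \<mu>' v *\<^sub>R v) = (\<Sum>v\<in>S. \<mu> v *\<^sub>R v) - \<theta> *\<^sub>R (\<Sum>v\<in>S. u v *\<^sub>R v)"
    by (simp add: \<mu>'_def scaleR_diff_left sum_subtractf scaleR_sum_right)
  then have "c = (\<Sum>v\<in>S. \<mu>' v *\<^sub>R v)"
    by (simp add: u c)
  also have "\<dots> = (\<Sum>v\<in>S'. \<mu>' v *\<^sub>R v)"
    unfolding S'_def by (rule sum_scaleR_restrict_pos) (use assms(1) nonneg in auto)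
  finally show ?thesis
    using \<open>S' \<subset> S\<close> by (intro exI[of _ S'] exI[of _ \<mu>']) (auto simp: S'_def)
qed

lemma conic_caratheodory:
  fixes S :: "'a::real_vector set"
  assumes "finite S" and "c \<in> convex_cone hull S"
  shows "\<exists>B\<subseteq>S. independent B \<and> (\<exists>\<mu>. (\<forall>v\<in>B. 0 < \<mu> v) \<and> c = (\<Sum>v\<in>B. \<mu> v *\<^sub>R v))"
proof -
  have positive: "\<exists>B\<subseteq>S'. independent B \<and> (\<exists>\<mu>. (\<forall>v\<in>B. 0 < \<mu> v) \<and> c = (\<Sum>v\<in>B. \<mu> v *\<^sub>R v))"
    if "finite S'" "\<forall>v\<in>S'. 0 < \<mu> v" "c = (\<Sum>v\<in>S'. \<mu> v *\<^sub>R v)" for S' \<mu>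
    using that
  proof (induction "card S'" arbitrary: S' \<mu> rule: less_induct)
    case less
    show ?case
    proof (cases "independent S'")
      case True
      with less.prems show ?thesis
        by blast
    next
      case False
      then obtain S'' \<mu>' where S'': "S'' \<subset> S'" "\<forall>v\<in>S''. 0 < \<mu>' v" "c = (\<Sum>v\<in>S''. \<mu>' v *\<^sub>R v)"
        using positive_combination_dependent_shrink[OF less.prems(1) _ less.prems(2,3)] by blast
      have "card S'' < card S'" "finite S''"
        using S''(1) less.prems(1) by (auto intro: psubset_card_mono finite_subset)
      from less.hyps[OF this S''(2,3)] S''(1) show ?thesis
        by blast
    qed
  qed
  obtain \<mu> where \<mu>: "\<forall>v\<in>S. 0 \<le> \<mu> v" "c = (\<Sum>v\<in>S. \<mu> v *\<^sub>R v)"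
    using assms by (auto simp: convex_cone_hull_finite)
  define S' where "S' = {v\<in>S. 0 < \<mu> v}"
  have "c = (\<Sum>v\<in>S'. \<mu> v *\<^sub>R v)"
    unfolding S'_def \<mu>(2) by (rule sum_scaleR_restrict_pos) (use assms(1) \<mu>(1) in auto)
  moreover have "finite S'" "\<forall>v\<in>S'. 0 < \<mu> v"
    using assms(1) by (auto simp: S'_def)
  ultimately obtain B where "B \<subseteq> S'" "independent B" "\<exists>\<mu>. (\<forall>v\<in>B. 0 < \<mu> v) \<and> c = (\<Sum>v\<in>B. \<mu> v *\<^sub>R v)"
    using positive[of S' \<mu>] by blast
  moreover have "S' \<subseteq> S"
    by (auto simp: S'_def)
  ultimately show ?thesis
    by blast
qed

section \<open>Bases and exceptional events\<close>

text \<open>The feasible region as a polyhedron with one constraint per element of \<open>'m + 'n\<close>: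
  \<open>Inl i\<close> is the \<open>i\<close>-th row of \<open>A x \<le> b\<close> and \<open>Inr j\<close> is \<open>- x\<^sub>j \<le> 0\<close>.\<close>

definition lp_row :: "real^'n^'m \<Rightarrow> 'm + 'n \<Rightarrow> real^'n" where
  "lp_row A t = (case t of Inl i \<Rightarrow> A $ i | Inr j \<Rightarrow> - axis j 1)"

definition lp_rhs :: "real^'m \<Rightarrow> 'm + 'n \<Rightarrow> real" where
  "lp_rhs b t = (case t of Inl i \<Rightarrow> b $ i | Inr j \<Rightarrow> 0)"

lemma matrix_vector_mult_nth_inner: "(A *v x) $ i = A $ i \<bullet> x"
  by (simp add: matrix_vector_mult_def inner_vec_def)

lemma lp_feasible_iff_rows: "lp_feasible A b x \<longleftrightarrow> (\<forall>t. lp_row A t \<bullet> x \<le> lp_rhs b t)"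
  by (auto simp: lp_feasible_def split_sum_all lp_row_def lp_rhs_def matrix_vector_mult_nth_inner inner_axis')

lemma span_range_lp_row: "span (range (lp_row (A::real^'n^'m))) = UNIV"
proof -
  have "x \<in> span (range (lp_row A))" for x :: "real^'n"
  proof -
    have "x = (\<Sum>j\<in>UNIV. (- x $ j) *\<^sub>R lp_row A (Inr j))"
      using basis_expansion[of x] by (simp add: lp_row_def scalar_mult_eq_scaleR)
    also have "\<dots> \<in> span (range (lp_row A))"
      by (intro span_sum span_scale span_base) auto
    finally show ?thesis .
  qed
  then show ?thesis
    by auto
qed

definition basis_matrix :: "real^'n^'m \<Rightarrow> ('n \<Rightarrow> 'm + 'n) \<Rightarrow> real^'n^'n" where
  "basis_matrix A R = (\<chi> k. lp_row A (R k))"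

definition basis_rhs :: "real^'m \<Rightarrow> ('n \<Rightarrow> 'm + 'n) \<Rightarrow> real^'n" where
  "basis_rhs b R = (\<chi> k. lp_rhs b (R k))"

text \<open>The basic primal and dual solutions of a basis are written out by Cramer's rule, which makes
  them visibly measurable in the data; for a singular basis matrix they are junk (zero).\<close>

definition basic_solution :: "real^'n^'m \<Rightarrow> real^'m \<Rightarrow> ('n \<Rightarrow> 'm + 'n) \<Rightarrow> real^'n" where
  "basic_solution A b R = (\<chi> k. det (\<chi> i l. if l = k then basis_rhs b R $ i else basis_matrix A R $ i $ l)
     / det (basis_matrix A R))"

definition basic_dual :: "real^'n^'m \<Rightarrow> real^'n \<Rightarrow> ('n \<Rightarrow> 'm + 'n) \<Rightarrow> real^'n" where
  "basic_dual A c R = (\<chi> k. det (\<chi> i l. if l = k then c $ i else transpose (basis_matrix A R) $ i $ l)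
     / det (basis_matrix A R))"

definition optimal_basis :: "real^'n^'m \<Rightarrow> real^'m \<Rightarrow> real^'n \<Rightarrow> ('n \<Rightarrow> 'm + 'n) \<Rightarrow> bool" where
  "optimal_basis A b c R \<longleftrightarrow> det (basis_matrix A R) \<noteq> 0 \<and> lp_feasible A b (basic_solution A b R)
     \<and> (\<forall>k. 0 < basic_dual A c R $ k)"

lemma basis_matrix_mult_nth: "(basis_matrix A R *v x) $ k = lp_row A (R k) \<bullet> x"
  by (simp add: basis_matrix_def matrix_vector_mult_nth_inner)

lemma basic_solution_iff:
  assumes "det (basis_matrix A R) \<noteq> 0"
  shows "basis_matrix A R *v x = basis_rhs b R \<longleftrightarrow> x = basic_solution A b R"
  unfolding basic_solution_def using cramer[OF assms] by simp

lemma basic_dual_iff: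
  assumes "det (basis_matrix A R) \<noteq> 0"
  shows "transpose (basis_matrix A R) *v w = c \<longleftrightarrow> w = basic_dual A c R"
  unfolding basic_dual_def using assms cramer[of "transpose (basis_matrix A R)" w c] by simp

text \<open>Weak duality: \<open>c \<bullet> x\<^sub>R - c \<bullet> y\<close> is the sum over the basis of the dual weights times the
  slacks of \<open>y\<close>, so it vanishes only if \<open>y\<close> makes all basis constraints tight.\<close>

lemma optimal_basis_unique_optimal:
  assumes "optimal_basis A b c R"
  shows "lp_unique_optimal A b c (basic_solution A b R)"
proof -
  define M x w where "M = basis_matrix A R" and "x = basic_solution A b R" and "w = basic_dual A c R"
  have det: "det (basis_matrix A R) \<noteq> 0" and "lp_feasible A b x" and w: "\<forall>k. 0 < w $ k"
    using assms by (auto simp: optimal_basis_def x_def w_def)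
  have Mx: "M *v x = basis_rhs b R"
    unfolding M_def x_def using basic_solution_iff[OF det] by blast
  have c: "transpose M *v w = c"
    unfolding M_def w_def using basic_dual_iff[OF det] by blast
  have "c \<bullet> y = w \<bullet> (M *v y)" for y
    using dot_lmul_matrix[of w M y] by (simp add: c[symmetric])
  then have gap: "c \<bullet> x - c \<bullet> y = (\<Sum>k\<in>UNIV. w $ k * (basis_rhs b R $ k - (M *v y) $ k))" for y
    by (simp add: Mx inner_vec_def sum_subtractf right_diff_distrib)
  have "c \<bullet> y < c \<bullet> x" if y: "lp_feasible A b y" "y \<noteq> x" for y
  proof -
    have le: "(M *v y) $ k \<le> basis_rhs b R $ k" for k
      using y(1) by (simp add: lp_feasible_iff_rows M_def basis_matrix_mult_nth basis_rhs_def)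
    have "M *v y \<noteq> basis_rhs b R"
      using y(2) basic_solution_iff[OF det] by (simp add: M_def x_def)
    then obtain k where "(M *v y) $ k < basis_rhs b R $ k"
      using le by (metis order_less_le vec_eq_iff)
    then have "0 < (\<Sum>k\<in>UNIV. w $ k * (basis_rhs b R $ k - (M *v y) $ k))"
      using w le by (intro sum_pos2[of _ k]) (auto simp: less_imp_le)
    then show ?thesis
      using gap[of y] by simp
  qed
  with \<open>lp_feasible A b x\<close> show ?thesis
    by (simp add: lp_unique_optimal_def x_def)
qed

lemma lp_opt_basic_solution: "optimal_basis A b c R \<Longrightarrow> lp_opt A b c = basic_solution A b R"
  by (intro lp_opt_eqI optimal_basis_unique_optimal)

lemma det_ne_zero_if_rows_independent:
  fixes M :: "real^'n^'n"
  assumes rows: "bij_betw (\<lambda>k. M $ k) UNIV B" and "independent B"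
  shows "det M \<noteq> 0"
proof -
  have "finite B"
    using bij_betw_finite[OF rows] by simp
  have "c = (\<lambda>_. 0)" if "(\<Sum>k\<in>UNIV. c k *\<^sub>R M $ k) = 0" for c
  proof -
    define u where "u v = c (inv_into UNIV (\<lambda>k. M $ k) v)" for v
    have u: "u (M $ k) = c k" for k
      using bij_betw_inv_into_left[OF rows] by (simp add: u_def)
    have "(\<Sum>v\<in>B. u v *\<^sub>R v) = 0"
      using that sum.reindex_bij_betw[OF rows, of "\<lambda>v. u v *\<^sub>R v"] by (simp add: u)
    then have "\<forall>v\<in>B. u v = 0"
      using \<open>independent B\<close> dependent_finite[OF \<open>finite B\<close>] by blast
    then show ?thesis
      using rows u by (force simp: bij_betw_def)
  qed
  then show ?thesis
    by (auto simp: invertible_det_nz[symmetric] invertible_right_inverse matrix_right_invertible_independent_rows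
        row_def scalar_mult_eq_scaleR fun_eq_iff)
qed

lemma det_replace_row_eq_0:
  fixes r :: "'n \<Rightarrow> real^'n"
  assumes "c \<in> span {r i | i. i \<noteq> k}"
  shows "det (\<chi> i. if i = k then c else r i) = 0"
proof -
  define Z :: "real^'n^'n" where "Z = (\<chi> i. if i = k then 0 else r i)"
  have "{row i Z | i. i \<noteq> k} = {r i | i. i \<noteq> k}"
    by (auto simp: Z_def row_def)
  then have "det (\<chi> i. if i = k then row k Z + c else row i Z) = det Z"
    using assms by (intro det_row_span) (simp add: span_vec_eq)
  also have "det Z = 0"
    by (rule det_zero_row(1)[of k]) (simp add: Z_def row_def vec_eq_iff)
  also have "(\<chi> i. if i = k then row k Z + c else row i Z) = (\<chi> i. if i = k then c else r i)"
    by (simp add: Z_def row_def vec_eq_iff)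
  finally show ?thesis .
qed

lemma det_replace_row_linear:
  fixes r :: "'n \<Rightarrow> real^'n"
  shows "det (\<chi> i. if i = k then c else r i) = (\<chi> l. det (\<chi> i. if i = k then axis l 1 else r i)) \<bullet> c"
proof -
  have "det (\<chi> i. if i = k then c else r i) = det (\<chi> i. if i = k then (\<Sum>l\<in>UNIV. c $ l *s axis l 1) else r i)"
    by (simp only: basis_expansion)
  also have "\<dots> = (\<Sum>l\<in>UNIV. c $ l * det (\<chi> i. if i = k then axis l 1 else r i))"
    by (subst det_linear_row_sum) (simp_all add: det_row_mul)
  finally show ?thesis
    by (simp add: inner_vec_def mult.commute)
qed

text \<open>That is, \<open>c\<close> lies in the span of the other \<open>n - 1\<close> rows of a nonsingular basis.\<close>

definition degenerate_objective :: "real^'n^'m \<Rightarrow> real^'n \<Rightarrow> ('n \<Rightarrow> 'm + 'n) \<Rightarrow> 'n \<Rightarrow> bool" where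
  "degenerate_objective A c R k \<longleftrightarrow>
     det (basis_matrix A R) \<noteq> 0 \<and> det (\<chi> i. if i = k then c else lp_row A (R i)) = 0"

definition small_basic_coordinate ::
  "real \<Rightarrow> real^'n^'m \<Rightarrow> real^'m \<Rightarrow> real^'n \<Rightarrow> ('n \<Rightarrow> 'm + 'n) \<Rightarrow> 'n \<Rightarrow> bool" where
  "small_basic_coordinate \<epsilon> A b c R j \<longleftrightarrow> optimal_basis A b c R \<and>
     0 < basic_solution A b R $ j \<and> basic_solution A b R $ j \<le> \<epsilon> / (norm (column j A) + 2)\<^sup>2"

lemma optimal_basis_of_tight_rows:
  fixes A :: "real^'n^'m"
  assumes z: "lp_feasible A b z"
    and B: "B \<subseteq> lp_row A ` {t. lp_row A t \<bullet> z = lp_rhs b t}" "independent B" "card B = CARD('n)"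
    and \<mu>: "\<forall>v\<in>B. 0 < \<mu> v" "c = (\<Sum>v\<in>B. \<mu> v *\<^sub>R v)"
  shows "\<exists>R. optimal_basis A b c R \<and> basic_solution A b R = z"
proof -
  have "finite B"
    using B(3) card.infinite by force
  then obtain \<beta> where \<beta>: "bij_betw \<beta> (UNIV :: 'n set) B"
    using finite_same_card_bij[of "UNIV :: 'n set" B] B(3) by auto
  define R where "R k = (SOME t. lp_row A t \<bullet> z = lp_rhs b t \<and> lp_row A t = \<beta> k)" for k
  have R: "lp_row A (R k) \<bullet> z = lp_rhs b (R k) \<and> lp_row A (R k) = \<beta> k" for k
  proof -
    have "\<beta> k \<in> lp_row A ` {t. lp_row A t \<bullet> z = lp_rhs b t}"
      using B(1) bij_betw_apply[OF \<beta>] by blast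
    then obtain t where "lp_row A t \<bullet> z = lp_rhs b t \<and> lp_row A t = \<beta> k"
      by auto
    then show ?thesis
      unfolding R_def by (rule someI)
  qed
  then have rows: "basis_matrix A R $ k = \<beta> k" for k
    by (simp add: basis_matrix_def)
  have det: "det (basis_matrix A R) \<noteq> 0"
    using \<beta> B(2) by (intro det_ne_zero_if_rows_independent[of _ B]) (simp add: rows)
  have "basis_matrix A R *v z = basis_rhs b R"
    using R by (simp add: vec_eq_iff basis_matrix_mult_nth basis_rhs_def)
  then have primal: "basic_solution A b R = z"
    using basic_solution_iff[OF det] by simp
  have "transpose (basis_matrix A R) *v (\<chi> k. \<mu> (\<beta> k)) = (\<Sum>k\<in>UNIV. \<mu> (\<beta> k) *\<^sub>R \<beta> k)"
    by (simp add: vec_eq_iff matrix_vector_mult_def transpose_def sum_component rows mult.commute)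
  also have "\<dots> = c"
    using sum.reindex_bij_betw[OF \<beta>, of "\<lambda>v. \<mu> v *\<^sub>R v"] \<mu>(2) by simp
  finally have "basic_dual A c R = (\<chi> k. \<mu> (\<beta> k))"
    using basic_dual_iff[OF det] by simp
  then have "optimal_basis A b c R"
    using det z primal \<mu>(1) bij_betwE[OF \<beta>] by (simp add: optimal_basis_def)
  with primal show ?thesis
    by blast
qed

lemma degenerate_objective_of_rows:
  fixes A :: "real^'n^'m"
  assumes B: "independent B" "B \<subseteq> range (lp_row A)" "card B < CARD('n)" and "c \<in> span B"
  shows "\<exists>R k. degenerate_objective A c R k"
proof -
  obtain B' where B': "B \<subseteq> B'" "B' \<subseteq> range (lp_row A)" "independent B'" "range (lp_row A) \<subseteq> span B'"
    using maximal_independent_subset_extend[OF B(2,1)] by blast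
  have "span B' = UNIV"
    using span_mono[OF B'(4)] span_range_lp_row[of A] by (auto simp: span_span)
  then have "card B' = CARD('n)" "finite B'"
    using dim_span_eq_card_independent[OF B'(3)] independent_bound[OF B'(3)] by (simp_all add: dim_UNIV)
  then obtain \<beta> where \<beta>: "bij_betw \<beta> (UNIV :: 'n set) B'"
    using finite_same_card_bij[of "UNIV :: 'n set" B'] by auto
  have "\<not> B' \<subseteq> B"
  proof
    assume "B' \<subseteq> B"
    then have "card B' \<le> card B"
      using B'(1) \<open>finite B'\<close> by (metis card_mono finite_subset)
    with B(3) \<open>card B' = CARD('n)\<close> show False
      by simp
  qed
  then obtain k where "\<beta> k \<notin> B"
    using \<beta> by (auto simp: bij_betw_def)
  define R where "R i = (SOME t. lp_row A t = \<beta> i)" for i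
  have rows: "basis_matrix A R $ i = \<beta> i" for i
  proof -
    have "\<beta> i \<in> range (lp_row A)"
      using B'(2) bij_betw_apply[OF \<beta>] by blast
    then obtain t where "lp_row A t = \<beta> i"
      by auto
    then have "lp_row A (R i) = \<beta> i"
      unfolding R_def by (rule someI)
    then show ?thesis
      by (simp add: basis_matrix_def)
  qed
  have det: "det (basis_matrix A R) \<noteq> 0"
    using \<beta> B'(3) by (intro det_ne_zero_if_rows_independent[of _ B']) (simp add: rows)
  have "B \<subseteq> {lp_row A (R i) | i. i \<noteq> k}"
  proof
    fix v assume "v \<in> B"
    then obtain i where "\<beta> i = v"
      using B'(1) \<beta> by (auto simp: bij_betw_def)
    with \<open>v \<in> B\<close> \<open>\<beta> k \<notin> B\<close> rows show "v \<in> {lp_row A (R i) | i. i \<noteq> k}"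
      by (auto simp: basis_matrix_def)
  qed
  then have "det (\<chi> i. if i = k then c else lp_row A (R i)) = 0"
    using span_mono \<open>c \<in> span B\<close> by (intro det_replace_row_eq_0) blast
  with det have "degenerate_objective A c R k"
    by (simp add: degenerate_objective_def)
  then show ?thesis
    by blast
qed

lemma alpha_P_leD:
  assumes "alpha_P A b c \<le> ereal r"
  shows "\<exists>j. 0 < lp_opt A b c $ j \<and> lp_opt A b c $ j \<le> r"
proof -
  define x where "x = lp_opt A b c"
  have "{j. 0 < x $ j} \<noteq> {}"
  proof
    assume "{j. 0 < x $ j} = {}"
    then have "alpha_P A b c = \<infinity>"
      unfolding alpha_P_def x_def[symmetric] by (simp add: top_ereal_def)
    with assms show False
      by simp
  qed
  then have "alpha_P A b c = Min ((\<lambda>j. ereal (x $ j)) ` {j. 0 < x $ j})"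
    unfolding alpha_P_def x_def[symmetric] by (simp add: cInf_eq_Min)
  moreover have "Min ((\<lambda>j. ereal (x $ j)) ` {j. 0 < x $ j}) \<in> (\<lambda>j. ereal (x $ j)) ` {j. 0 < x $ j}"
    using \<open>{j. 0 < x $ j} \<noteq> {}\<close> by (intro Min_in) auto
  ultimately obtain j where "0 < x $ j" "alpha_P A b c = ereal (x $ j)"
    by auto
  with assms show ?thesis
    by (auto simp: x_def)
qed

lemma norm_column_le_spec_norm: "norm (column j A) \<le> spec_norm (A::real^'n^'m)"
  using onorm[OF matrix_vector_mul_bounded_linear, of A "axis j 1"]
  by (simp add: spec_norm_def matrix_vector_mult_basis)

lemma divide_spec_norm_le_divide_norm_column:
  fixes A :: "real^'n^'m"
  assumes "0 \<le> \<epsilon>"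
  shows "\<epsilon> / ((spec_norm A + 2)\<^sup>2 * (norm z + 1)) \<le> \<epsilon> / (norm (column j A) + 2)\<^sup>2"
proof -
  have pos: "0 < norm (column j A) + 2" "0 < norm z + 1"
    by (simp_all add: add_nonneg_pos)
  have "(norm (column j A) + 2)\<^sup>2 \<le> (spec_norm A + 2)\<^sup>2"
    using norm_column_le_spec_norm[of j A] pos by (intro power_mono) auto
  also have "\<dots> \<le> (spec_norm A + 2)\<^sup>2 * (norm z + 1)"
    by (simp add: mult_le_cancel_left1)
  finally have le: "(norm (column j A) + 2)\<^sup>2 \<le> (spec_norm A + 2)\<^sup>2 * (norm z + 1)" .
  have "0 < (norm (column j A) + 2)\<^sup>2"
    using pos by simp
  moreover from this have "0 < (spec_norm A + 2)\<^sup>2 * (norm z + 1)"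
    using le by linarith
  ultimately show ?thesis
    using divide_left_mono[OF le assms] by simp
qed

text \<open>By KKT and conic Caratheodory the objective is a positive combination of independent rows
  that are tight at an optimum. With \<open>n\<close> of them they form an optimal basis; with fewer,
  completing them to a basis of rows exhibits a degenerate objective.\<close>

lemma lp_small_alpha_cases:
  fixes A :: "real^'n^'m"
  assumes F: "lp_feasible_bounded A b c" and "0 \<le> \<epsilon>"
    and \<alpha>: "alpha_P A b c \<le> ereal (\<epsilon> / ((spec_norm A + 2)\<^sup>2 * (norm (lp_opt A b c) + 1)))"
  shows "(\<exists>R k. degenerate_objective A c R k) \<or> (\<exists>R j. small_basic_coordinate \<epsilon> A b c R j)"
proof -
  obtain z where z: "lp_optimal A b c z"
    using lp_optimal_exists[OF F] by blast
  then have "c \<in> convex_cone hull (lp_row A ` {t. lp_row A t \<bullet> z = lp_rhs b t})"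
    by (intro polyhedron_max_imp_convex_cone_hull_tight) (auto simp: lp_optimal_def lp_feasible_iff_rows)
  then have "\<exists>B\<subseteq>lp_row A ` {t. lp_row A t \<bullet> z = lp_rhs b t}.
      independent B \<and> (\<exists>\<mu>. (\<forall>v\<in>B. 0 < \<mu> v) \<and> c = (\<Sum>v\<in>B. \<mu> v *\<^sub>R v))"
    by (intro conic_caratheodory) simp
  then obtain B \<mu> where B: "B \<subseteq> lp_row A ` {t. lp_row A t \<bullet> z = lp_rhs b t}" "independent B"
    and \<mu>: "\<forall>v\<in>B. 0 < \<mu> v" "c = (\<Sum>v\<in>B. \<mu> v *\<^sub>R v)"
    by blast
  have "card B \<le> CARD('n)"
    using independent_bound[OF B(2)] by simp
  then consider "card B = CARD('n)" | "card B < CARD('n)"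
    by linarith
  then show ?thesis
  proof cases
    case 1
    then obtain R where R: "optimal_basis A b c R" "basic_solution A b R = z"
      using optimal_basis_of_tight_rows[OF _ B 1 \<mu>] z by (auto simp: lp_optimal_def)
    then have opt: "lp_opt A b c = z"
      using lp_opt_basic_solution[OF R(1)] by simp
    then obtain j where j: "0 < z $ j" "z $ j \<le> \<epsilon> / ((spec_norm A + 2)\<^sup>2 * (norm z + 1))"
      using alpha_P_leD[OF \<alpha>] by auto
    with divide_spec_norm_le_divide_norm_column[OF \<open>0 \<le> \<epsilon>\<close>, of A z j] R
    have "small_basic_coordinate \<epsilon> A b c R j"
      by (simp add: small_basic_coordinate_def)
    then show ?thesis
      by blast
  next
    case 2
    have "c \<in> span B"
      unfolding \<mu>(2) by (rule span_sum) (simp add: span_base span_scale)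
    moreover have "B \<subseteq> range (lp_row A)"
      using B(1) by blast
    ultimately show ?thesis
      using degenerate_objective_of_rows[OF B(2) _ 2] by blast
  qed
qed

section \<open>Shifting the right-hand side along a column\<close>

lemma lp_feasible_shift_column:
  assumes "lp_feasible A b x" and "0 \<le> d"
  shows "lp_feasible A (b + d *\<^sub>R column j A) (x + d *\<^sub>R axis j 1)"
proof -
  have "A *v (x + d *\<^sub>R axis j 1) = A *v x + d *\<^sub>R column j A"
    by (simp add: matrix_vector_right_distrib matrix_vector_mult_scaleR matrix_vector_mult_basis)
  moreover have "0 \<le> (x + d *\<^sub>R axis j 1) $ k" for k
    using assms by (simp add: axis_def lp_feasible_def)
  ultimately show ?thesis
    using assms(1) by (simp add: lp_feasible_def)
qed

lemma lp_feasible_combination_zero_coordinate: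
  assumes x: "lp_feasible A b x" and y: "\<And>i. (A *v y) $ i \<le> b $ i" "\<And>k. k \<noteq> j \<Longrightarrow> 0 \<le> y $ k"
    and "0 \<le> \<theta>" "\<theta> \<le> 1" and "(\<theta> *\<^sub>R y + (1 - \<theta>) *\<^sub>R x) $ j = 0"
  shows "lp_feasible A b (\<theta> *\<^sub>R y + (1 - \<theta>) *\<^sub>R x)"
  unfolding lp_feasible_def
proof (intro conjI allI)
  fix k
  show "0 \<le> (\<theta> *\<^sub>R y + (1 - \<theta>) *\<^sub>R x) $ k"
    using assms by (cases "k = j") (auto simp: lp_feasible_def)
next
  fix i
  have "\<theta> * (A *v y) $ i + (1 - \<theta>) * (A *v x) $ i \<le> \<theta> * b $ i + (1 - \<theta>) * b $ i"
    using assms by (intro add_mono mult_left_mono) (auto simp: lp_feasible_def)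
  then show "(A *v (\<theta> *\<^sub>R y + (1 - \<theta>) *\<^sub>R x)) $ i \<le> b $ i"
    by (simp add: matrix_vector_right_distrib matrix_vector_mult_scaleR algebra_simps)
qed

text \<open>Shifting \<open>b\<close> along the column \<open>a\<^sub>j\<close> of \<open>A\<close> by \<open>d\<close> is absorbed by raising \<open>x\<^sub>j\<close> by \<open>d\<close>.
  Hence if \<open>x\<^sub>j > 0\<close> at an optimum of the original program, the unique optimum \<open>q\<close> of the shifted
  program must have \<open>q\<^sub>j > d\<close>: otherwise a convex combination of \<open>x\<close> and \<open>q - d e\<^sub>j\<close> would
  beat \<open>x\<close>.\<close>

lemma lp_optimal_column_shift:
  fixes A :: "real^'n^'m"
  assumes x: "lp_optimal A b c x" "0 < x $ j"
    and q: "lp_unique_optimal A (b + d *\<^sub>R column j A) c q" and "0 < d"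
  shows "d < q $ j"
proof (rule ccontr)
  assume "\<not> d < q $ j"
  define y where "y = q - d *\<^sub>R axis j 1"
  have x_feasible: "lp_feasible A b x" and q_feasible: "lp_feasible A (b + d *\<^sub>R column j A) q"
    using x(1) q by (auto simp: lp_optimal_def lp_unique_optimal_def)
  have "(x + d *\<^sub>R axis j 1) $ j \<noteq> q $ j"
    using x(2) \<open>\<not> d < q $ j\<close> by simp
  then have "c \<bullet> (x + d *\<^sub>R axis j 1) < c \<bullet> q"
    using q lp_feasible_shift_column[OF x_feasible less_imp_le[OF \<open>0 < d\<close>]]
    unfolding lp_unique_optimal_def by blast
  then have "c \<bullet> x < c \<bullet> y"
    by (simp add: y_def inner_add_right inner_diff_right)
  define \<theta> where "\<theta> = x $ j / (x $ j - y $ j)"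
  have "y $ j \<le> 0"
    using \<open>\<not> d < q $ j\<close> by (simp add: y_def)
  then have "0 < \<theta>" "\<theta> \<le> 1"
    using x(2) by (simp_all add: \<theta>_def)
  have "lp_feasible A b (\<theta> *\<^sub>R y + (1 - \<theta>) *\<^sub>R x)"
  proof (rule lp_feasible_combination_zero_coordinate[OF x_feasible])
    show "(A *v y) $ i \<le> b $ i" for i
    proof -
      have "(A *v q) $ i \<le> b $ i + d * column j A $ i"
        using q_feasible by (simp add: lp_feasible_def)
      then show ?thesis
        by (simp add: y_def matrix_vector_mult_diff_distrib matrix_vector_mult_scaleR matrix_vector_mult_basis)
    qed
    show "0 \<le> y $ k" if "k \<noteq> j" for k
      using q_feasible that by (simp add: y_def lp_feasible_def axis_def)
    show "(\<theta> *\<^sub>R y + (1 - \<theta>) *\<^sub>R x) $ j = 0"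
      using x(2) \<open>y $ j \<le> 0\<close> by (simp add: \<theta>_def field_simps)
  qed (use \<open>0 < \<theta>\<close> \<open>\<theta> \<le> 1\<close> in auto)
  moreover have "c \<bullet> x < c \<bullet> (\<theta> *\<^sub>R y + (1 - \<theta>) *\<^sub>R x)"
    using \<open>c \<bullet> x < c \<bullet> y\<close> mult_strict_left_mono[OF \<open>c \<bullet> x < c \<bullet> y\<close> \<open>0 < \<theta>\<close>]
    by (simp add: inner_add_right algebra_simps)
  ultimately show False
    using x(1) unfolding lp_optimal_def by (meson not_le)
qed

lemma small_basic_coordinate_gap:
  assumes "small_basic_coordinate \<epsilon> A (b + s *\<^sub>R column j A) c R j"
    and "small_basic_coordinate \<epsilon> A (b + t *\<^sub>R column j A) c R' j" and "s < t"
  shows "t - s \<le> \<epsilon> / (norm (column j A) + 2)\<^sup>2"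
proof -
  have shift: "(b + s *\<^sub>R column j A) + (t - s) *\<^sub>R column j A = b + t *\<^sub>R column j A"
    by (simp add: algebra_simps)
  have opt: "lp_optimal A (b + s *\<^sub>R column j A) c (basic_solution A (b + s *\<^sub>R column j A) R)"
    and pos: "0 < basic_solution A (b + s *\<^sub>R column j A) R $ j"
    using assms(1) unfolding small_basic_coordinate_def
    by (blast intro: lp_unique_optimal_imp_optimal optimal_basis_unique_optimal)+
  have "lp_unique_optimal A ((b + s *\<^sub>R column j A) + (t - s) *\<^sub>R column j A) c
      (basic_solution A (b + t *\<^sub>R column j A) R')"
    unfolding shift using assms(2) optimal_basis_unique_optimal
    unfolding small_basic_coordinate_def by blast
  from lp_optimal_column_shift[OF opt pos this] assms(3)
  have "t - s < basic_solution A (b + t *\<^sub>R column j A) R' $ j"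
    by simp
  with assms(2) show ?thesis
    by (simp add: small_basic_coordinate_def)
qed

lemma emeasure_lborel_le_if_gaps_le:
  fixes X :: "real set"
  assumes gaps: "\<And>s t. s \<in> X \<Longrightarrow> t \<in> X \<Longrightarrow> s < t \<Longrightarrow> t - s \<le> \<delta>" and "0 \<le> \<delta>"
  shows "emeasure lborel X \<le> ennreal \<delta>"
proof (cases "X = {}")
  case False
  have lower: "t - \<delta> \<le> s" if "s \<in> X" "t \<in> X" for s t
    using gaps[OF that] gaps[OF that(2,1)] \<open>0 \<le> \<delta>\<close> by (cases "s < t") (auto simp: not_less)
  have "X \<subseteq> {Inf X .. Inf X + \<delta>}"
  proof
    fix s assume "s \<in> X"
    have "Inf X \<le> s"
      using lower \<open>s \<in> X\<close> by (intro cInf_lower) (auto simp: bdd_below_def)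
    moreover have "s - \<delta> \<le> Inf X"
      using lower \<open>s \<in> X\<close> False by (intro cInf_greatest) auto
    ultimately show "s \<in> {Inf X .. Inf X + \<delta>}"
      by simp
  qed
  then have "emeasure lborel X \<le> emeasure lborel {Inf X .. Inf X + \<delta>}"
    by (intro emeasure_mono) auto
  with \<open>0 \<le> \<delta>\<close> show ?thesis
    by simp
qed simp

section \<open>Measurability\<close>

lemma borel_measurable_vec_nth [measurable]: "(\<lambda>x::'a::topological_space^'k. x $ i) \<in> borel_measurable borel"
  by (intro borel_measurable_continuous_onI continuous_intros)

lemma borel_measurable_vec_lambda [measurable]:
  fixes f :: "'x \<Rightarrow> 'k::finite \<Rightarrow> 'a::euclidean_space"
  assumes "\<And>i. (\<lambda>x. f x i) \<in> borel_measurable M"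
  shows "(\<lambda>x. \<chi> i. f x i) \<in> borel_measurable M"
  using assms by (subst borel_measurable_euclidean_space) (auto simp: Basis_vec_def inner_axis)

lemma borel_measurable_det [measurable]:
  fixes f :: "'x \<Rightarrow> real^'n^'n"
  assumes "f \<in> borel_measurable M"
  shows "(\<lambda>x. det (f x)) \<in> borel_measurable M"
proof -
  have "continuous_on UNIV (\<lambda>M::real^'n^'n. det M)"
    unfolding det_def by (intro continuous_intros)
  then show ?thesis
    by (rule measurable_compose[OF assms borel_measurable_continuous_onI])
qed

lemma borel_measurable_lp_row [measurable]:
  "f \<in> borel_measurable M \<Longrightarrow> (\<lambda>x. lp_row (f x) t) \<in> borel_measurable M"
  by (cases t) (simp_all add: lp_row_def measurable_compose[OF _ borel_measurable_vec_nth])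

lemma borel_measurable_lp_rhs [measurable]:
  "g \<in> borel_measurable M \<Longrightarrow> (\<lambda>x. lp_rhs (g x) t) \<in> borel_measurable M"
  by (cases t) (simp_all add: lp_rhs_def measurable_compose[OF _ borel_measurable_vec_nth])

lemma borel_measurable_basis_matrix [measurable]:
  "f \<in> borel_measurable M \<Longrightarrow> (\<lambda>x. basis_matrix (f x) R) \<in> borel_measurable M"
  unfolding basis_matrix_def by measurable

lemma borel_measurable_basis_rhs [measurable]:
  "g \<in> borel_measurable M \<Longrightarrow> (\<lambda>x. basis_rhs (g x) R) \<in> borel_measurable M"
  unfolding basis_rhs_def by measurable

lemma borel_measurable_basic_solution [measurable]:
  assumes [measurable]: "f \<in> borel_measurable M" "g \<in> borel_measurable M"
  shows "(\<lambda>x. basic_solution (f x) (g x) R) \<in> borel_measurable M"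
  unfolding basic_solution_def by measurable

lemma borel_measurable_basic_dual [measurable]:
  assumes [measurable]: "f \<in> borel_measurable M" "h \<in> borel_measurable M"
  shows "(\<lambda>x. basic_dual (f x) (h x) R) \<in> borel_measurable M"
  unfolding basic_dual_def transpose_def by measurable

lemma pred_lp_feasible [measurable]:
  assumes [measurable]: "f \<in> borel_measurable M" "g \<in> borel_measurable M" "h \<in> borel_measurable M"
  shows "Measurable.pred M (\<lambda>x. lp_feasible (f x) (g x) (h x))"
  unfolding lp_feasible_def matrix_vector_mult_def by measurable

lemma pred_optimal_basis [measurable]:
  assumes [measurable]: "f \<in> borel_measurable M" "g \<in> borel_measurable M" "h \<in> borel_measurable M"
  shows "Measurable.pred M (\<lambda>x. optimal_basis (f x) (g x) (h x) R)"
  unfolding optimal_basis_def by measurable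

lemma pred_small_basic_coordinate [measurable]:
  assumes [measurable]: "f \<in> borel_measurable M" "g \<in> borel_measurable M" "h \<in> borel_measurable M"
  shows "Measurable.pred M (\<lambda>x. small_basic_coordinate \<epsilon> (f x) (g x) (h x) R j)"
  unfolding small_basic_coordinate_def column_def by measurable

lemma pred_degenerate_objective [measurable]:
  assumes [measurable]: "f \<in> borel_measurable M" "h \<in> borel_measurable M"
  shows "Measurable.pred M (\<lambda>x. degenerate_objective (f x) (h x) R k)"
  unfolding degenerate_objective_def basis_matrix_def
  by measurable

section \<open>Probability estimates\<close>

lemma null_sets_lborel_hyperplane:
  fixes w :: "'a::euclidean_space"
  assumes "w \<noteq> 0"
  shows "{x. w \<bullet> x = 0} \<in> null_sets lborel"
proof -
  have "closed {x. w \<bullet> x = 0}"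
    by (intro closed_Collect_eq continuous_intros)
  moreover have "negligible {x. w \<bullet> x = 0}"
    using negligible_hyperplane[of w 0] assms by simp
  ultimately show ?thesis
    by (simp add: negligible_iff_null_sets null_sets_completion_iff)
qed

lemma null_sets_degenerate_objective:
  fixes A :: "real^'n^'m"
  shows "{c. \<exists>R k. degenerate_objective A c R k} \<in> null_sets lborel"
proof -
  define w where "w R k = (\<chi> l. det (\<chi> i. if i = k then axis l 1 else lp_row A (R i)))" for R k
  have linear: "det (\<chi> i. if i = k then c else lp_row A (R i)) = w R k \<bullet> c" for R k c
    unfolding w_def by (rule det_replace_row_linear)
  have "{c. \<exists>R k. degenerate_objective A c R k} = (\<Union>R\<in>{R. det (basis_matrix A R) \<noteq> 0}. \<Union>k. {c. w R k \<bullet> c = 0})"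
    by (auto simp: degenerate_objective_def linear)
  also have "\<dots> \<in> null_sets lborel"
  proof (intro null_sets.finite_UN ballI null_sets_lborel_hyperplane)
    fix R k assume "R \<in> {R. det (basis_matrix A R) \<noteq> 0}"
    moreover have "w R k \<bullet> lp_row A (R k) = det (basis_matrix A R)"
      unfolding linear[symmetric] basis_matrix_def by (intro arg_cong[where f = det]) (auto simp: vec_eq_iff)
    ultimately show "w R k \<noteq> 0"
      by auto
  qed auto
  finally show ?thesis .
qed

lemma divide_add_two_power2_le:
  fixes x :: real
  assumes "0 \<le> x"
  shows "x / (x + 2)\<^sup>2 \<le> 1 / 8"
proof -
  have "8 * x \<le> (x + 2)\<^sup>2"
    using zero_le_power2[of "x - 2"] by (simp add: power2_eq_square algebra_simps)
  moreover have "0 < (x + 2)\<^sup>2"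
    using assms by simp
  ultimately show ?thesis
    by (simp add: pos_divide_le_eq)
qed

lemma emeasure_small_basic_coordinate_le:
  fixes A :: "real^'n^'m" and bbar :: "real^'m"
  assumes "0 < \<sigma>" and "0 < \<epsilon>"
  shows "emeasure (isotropic_normal bbar \<sigma>) {b. \<exists>R. small_basic_coordinate \<epsilon> A b c R j}
    \<le> ennreal (\<epsilon> * sqrt CARD('m) / (8 * \<sigma>))"
proof -
  define E where "E = {b. \<exists>R. small_basic_coordinate \<epsilon> A b c R j}"
  define v where "v = column j A"
  define \<delta> where "\<delta> = \<epsilon> / (norm v + 2)\<^sup>2"
  have "0 \<le> \<delta>"
    using assms by (simp add: \<delta>_def)
  have gap: "t - s \<le> \<delta>" if "b + s *\<^sub>R v \<in> E" "b + t *\<^sub>R v \<in> E" "s < t" for b s t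
    using that small_basic_coordinate_gap by (auto simp: E_def \<delta>_def v_def)
  show ?thesis
  proof (cases "v = 0")
    case True
    have "E = {}"
    proof (rule ccontr)
      assume "E \<noteq> {}"
      then obtain b where "b \<in> E"
        by blast
      with gap[of b 0 "\<delta> + 1"] True \<open>0 \<le> \<delta>\<close> show False
        by simp
    qed
    then show ?thesis
      by (simp add: E_def)
  next
    case False
    have "E \<in> sets borel"
      unfolding E_def by measurable
    moreover have "emeasure lborel {s. b + s *\<^sub>R v \<in> E} \<le> ennreal \<delta>" for b
      using gap \<open>0 \<le> \<delta>\<close> by (intro emeasure_lborel_le_if_gaps_le) auto
    ultimately have "emeasure (isotropic_normal bbar \<sigma>) E \<le> ennreal (\<delta> * norm v * sqrt CARD('m) / \<sigma>)"
      using emeasure_isotropic_normal_le_line_sections[OF \<open>0 < \<sigma>\<close> False _ \<open>0 \<le> \<delta>\<close>] by simp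
    also have "\<dots> \<le> ennreal (\<epsilon> * sqrt CARD('m) / (8 * \<sigma>))"
    proof (intro ennreal_leI)
      have "\<delta> * norm v = \<epsilon> * (norm v / (norm v + 2)\<^sup>2)"
        by (simp add: \<delta>_def)
      also have "\<dots> \<le> \<epsilon> * (1 / 8)"
        using assms by (intro mult_left_mono divide_add_two_power2_le) auto
      finally have "\<delta> * norm v * sqrt CARD('m) / \<sigma> \<le> \<epsilon> / 8 * sqrt CARD('m) / \<sigma>"
        using \<open>0 < \<sigma>\<close> by (intro divide_right_mono mult_right_mono) auto
      then show "\<delta> * norm v * sqrt CARD('m) / \<sigma> \<le> \<epsilon> * sqrt CARD('m) / (8 * \<sigma>)"
        by simp
    qed
    finally show ?thesis
      by (simp add: E_def)
  qed
qed

lemma emeasure_pair_measure_le_Pair_sections: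
  assumes "prob_space M" and "sigma_finite_measure N" and "X \<in> sets (M \<Otimes>\<^sub>M N)"
    and "\<And>x. x \<in> space M \<Longrightarrow> emeasure N (Pair x -` X) \<le> K"
  shows "emeasure (M \<Otimes>\<^sub>M N) X \<le> K"
proof -
  interpret M: prob_space M by fact
  interpret N: sigma_finite_measure N by fact
  have "emeasure (M \<Otimes>\<^sub>M N) X = (\<integral>\<^sup>+x. emeasure N (Pair x -` X) \<partial>M)"
    using assms(3) by (rule N.emeasure_pair_measure_alt)
  also have "\<dots> \<le> (\<integral>\<^sup>+x. K \<partial>M)"
    using assms(4) by (intro nn_integral_mono) auto
  also have "\<dots> = K"
    by (simp add: M.emeasure_space_1)
  finally show ?thesis .
qed

lemma emeasure_pair_measure_le_swap_sections:
  assumes "sigma_finite_measure M" and "prob_space N" and "X \<in> sets (M \<Otimes>\<^sub>M N)"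
    and "\<And>y. y \<in> space N \<Longrightarrow> emeasure M ((\<lambda>x. (x, y)) -` X) \<le> K"
  shows "emeasure (M \<Otimes>\<^sub>M N) X \<le> K"
proof -
  interpret M: sigma_finite_measure M by fact
  interpret N: prob_space N by fact
  interpret pair_sigma_finite M N ..
  have "emeasure (M \<Otimes>\<^sub>M N) X = (\<integral>\<^sup>+y. emeasure M ((\<lambda>x. (x, y)) -` X) \<partial>N)"
    using assms(3) by (rule emeasure_pair_measure_alt2)
  also have "\<dots> \<le> (\<integral>\<^sup>+y. K \<partial>N)"
    using assms(4) by (intro nn_integral_mono) auto
  also have "\<dots> = K"
    by (simp add: N.emeasure_space_1)
  finally show ?thesis .
qed

lemma gauss_perturb_eq_pair_measure:
  assumes "0 < \<sigma>"
  shows "gauss_perturb Abar bbar cbar \<sigma> =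
    isotropic_normal Abar \<sigma> \<Otimes>\<^sub>M (isotropic_normal bbar \<sigma> \<Otimes>\<^sub>M isotropic_normal cbar \<sigma>)"
  using assms by (simp add: gauss_perturb_eq_isotropic_normal isotropic_normal_Pair)

lemma sets_gauss_perturb:
  "0 < \<sigma> \<Longrightarrow> sets (gauss_perturb Abar bbar cbar \<sigma>) = sets (borel \<Otimes>\<^sub>M (borel \<Otimes>\<^sub>M borel))"
  unfolding gauss_perturb_eq_pair_measure by (intro sets_pair_measure_cong) simp_all

lemma sets_gauss_perturb_degenerate_objective:
  fixes Abar :: "real^'n^'m" and bbar :: "real^'m" and cbar :: "real^'n"
  assumes "0 < \<sigma>"
  shows "{(A, b, c). \<exists>R k. degenerate_objective A c R k} \<in> sets (gauss_perturb Abar bbar cbar \<sigma>)"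
proof -
  let ?B = "borel \<Otimes>\<^sub>M (borel \<Otimes>\<^sub>M borel) :: ((real^'n^'m) \<times> (real^'m) \<times> (real^'n)) measure"
  have "{x \<in> space ?B. \<exists>R k. degenerate_objective (fst x) (snd (snd x)) R k} \<in> sets ?B"
    by measurable
  moreover have "{(A, b, c). \<exists>R k. degenerate_objective A c R k} =
      {x \<in> space ?B. \<exists>R k. degenerate_objective (fst x) (snd (snd x)) R k}"
    by (fastforce simp: space_pair_measure)
  ultimately show ?thesis
    unfolding sets_gauss_perturb[OF assms] by simp
qed

lemma sets_gauss_perturb_small_basic_coordinate:
  fixes Abar :: "real^'n^'m" and bbar :: "real^'m" and cbar :: "real^'n"
  assumes "0 < \<sigma>"
  shows "{(A, b, c). \<exists>R. small_basic_coordinate \<epsilon> A b c R j} \<in> sets (gauss_perturb Abar bbar cbar \<sigma>)"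
proof -
  let ?B = "borel \<Otimes>\<^sub>M (borel \<Otimes>\<^sub>M borel) :: ((real^'n^'m) \<times> (real^'m) \<times> (real^'n)) measure"
  have "{x \<in> space ?B. \<exists>R. small_basic_coordinate \<epsilon> (fst x) (fst (snd x)) (snd (snd x)) R j} \<in> sets ?B"
    by measurable
  moreover have "{(A, b, c). \<exists>R. small_basic_coordinate \<epsilon> A b c R j} =
      {x \<in> space ?B. \<exists>R. small_basic_coordinate \<epsilon> (fst x) (fst (snd x)) (snd (snd x)) R j}"
    by (fastforce simp: space_pair_measure)
  ultimately show ?thesis
    unfolding sets_gauss_perturb[OF assms] by simp
qed

lemma emeasure_gauss_perturb_le_b_sections:
  assumes \<sigma>: "0 < \<sigma>" and S: "S \<in> sets (gauss_perturb Abar bbar cbar \<sigma>)"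
    and sections: "\<And>A c. emeasure (isotropic_normal bbar \<sigma>) {b. (A, b, c) \<in> S} \<le> K"
  shows "emeasure (gauss_perturb Abar bbar cbar \<sigma>) S \<le> K"
proof -
  have S': "S \<in> sets (isotropic_normal Abar \<sigma> \<Otimes>\<^sub>M (isotropic_normal bbar \<sigma> \<Otimes>\<^sub>M isotropic_normal cbar \<sigma>))"
    using S by (simp only: gauss_perturb_eq_pair_measure[OF \<sigma>])
  have inner: "emeasure (isotropic_normal bbar \<sigma> \<Otimes>\<^sub>M isotropic_normal cbar \<sigma>) (Pair A -` S) \<le> K" for A
    by (rule emeasure_pair_measure_le_swap_sections[OF _ _ sets_Pair1[OF S']])
      (use sections \<sigma> in \<open>auto simp: vimage_def intro: prob_space_imp_sigma_finite prob_space_isotropic_normal\<close>)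
  show ?thesis
    unfolding gauss_perturb_eq_pair_measure[OF \<sigma>]
    by (rule emeasure_pair_measure_le_Pair_sections[OF _ _ S'])
      (use inner \<sigma> in \<open>auto intro: prob_space_imp_sigma_finite prob_space_isotropic_normal prob_space_pair\<close>)
qed

lemma emeasure_gauss_perturb_le_c_sections:
  assumes \<sigma>: "0 < \<sigma>" and S: "S \<in> sets (gauss_perturb Abar bbar cbar \<sigma>)"
    and sections: "\<And>A b. emeasure (isotropic_normal cbar \<sigma>) {c. (A, b, c) \<in> S} \<le> K"
  shows "emeasure (gauss_perturb Abar bbar cbar \<sigma>) S \<le> K"
proof -
  have S': "S \<in> sets (isotropic_normal Abar \<sigma> \<Otimes>\<^sub>M (isotropic_normal bbar \<sigma> \<Otimes>\<^sub>M isotropic_normal cbar \<sigma>))"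
    using S by (simp only: gauss_perturb_eq_pair_measure[OF \<sigma>])
  have inner: "emeasure (isotropic_normal bbar \<sigma> \<Otimes>\<^sub>M isotropic_normal cbar \<sigma>) (Pair A -` S) \<le> K" for A
    by (rule emeasure_pair_measure_le_Pair_sections[OF _ _ sets_Pair1[OF S']])
      (use sections \<sigma> in \<open>auto simp: vimage_def intro: prob_space_imp_sigma_finite prob_space_isotropic_normal\<close>)
  show ?thesis
    unfolding gauss_perturb_eq_pair_measure[OF \<sigma>]
    by (rule emeasure_pair_measure_le_Pair_sections[OF _ _ S'])
      (use inner \<sigma> in \<open>auto intro: prob_space_imp_sigma_finite prob_space_isotropic_normal prob_space_pair\<close>)
qed

lemma emeasure_gauss_perturb_degenerate_objective:
  fixes Abar :: "real^'n^'m" and bbar :: "real^'m" and cbar :: "real^'n"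
  assumes "0 < \<sigma>"
  shows "emeasure (gauss_perturb Abar bbar cbar \<sigma>) {(A, b, c). \<exists>R k. degenerate_objective A c R k} = 0"
proof -
  have "emeasure (gauss_perturb Abar bbar cbar \<sigma>) {(A, b, c). \<exists>R k. degenerate_objective A c R k} \<le> 0"
    using emeasure_isotropic_normal_null[OF null_sets_degenerate_objective]
    by (intro emeasure_gauss_perturb_le_c_sections[OF assms sets_gauss_perturb_degenerate_objective[OF assms]]) simp
  then show ?thesis
    by simp
qed

lemma emeasure_gauss_perturb_small_basic_coordinate:
  fixes Abar :: "real^'n^'m" and bbar :: "real^'m" and cbar :: "real^'n"
  assumes "0 < \<sigma>" and "0 < \<epsilon>"
  shows "emeasure (gauss_perturb Abar bbar cbar \<sigma>) {(A, b, c). \<exists>R. small_basic_coordinate \<epsilon> A b c R j}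
    \<le> ennreal (\<epsilon> * sqrt CARD('m) / (8 * \<sigma>))"
  using emeasure_small_basic_coordinate_le[OF assms]
  by (intro emeasure_gauss_perturb_le_b_sections[OF assms(1) sets_gauss_perturb_small_basic_coordinate[OF assms(1)]])
    simp

lemma lp_small_alpha_event_subset:
  assumes "0 \<le> \<epsilon>"
  shows "{(A, b, c). lp_feasible_bounded A b c \<and>
      alpha_P A b c \<le> ereal (\<epsilon> / ((spec_norm A + 2)\<^sup>2 * (norm (lp_opt A b c) + 1)))}
    \<subseteq> {(A, b, c). \<exists>R k. degenerate_objective A c R k} \<union>
      (\<Union>j. {(A, b, c). \<exists>R. small_basic_coordinate \<epsilon> A b c R j})"
proof
  fix x :: "(real^'n^'m) \<times> (real^'m) \<times> (real^'n)"
  assume "x \<in> {(A, b, c). lp_feasible_bounded A b c \<and>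
    alpha_P A b c \<le> ereal (\<epsilon> / ((spec_norm A + 2)\<^sup>2 * (norm (lp_opt A b c) + 1)))}"
  then obtain A b c where x: "x = (A, b, c)" "lp_feasible_bounded A b c"
    "alpha_P A b c \<le> ereal (\<epsilon> / ((spec_norm A + 2)\<^sup>2 * (norm (lp_opt A b c) + 1)))"
    by blast
  from lp_small_alpha_cases[OF x(2) assms x(3)]
  show "x \<in> {(A, b, c). \<exists>R k. degenerate_objective A c R k} \<union>
      (\<Union>j. {(A, b, c). \<exists>R. small_basic_coordinate \<epsilon> A b c R j})"
    unfolding x(1) by auto
qed

lemma measure_null_Un_UN_le:
  fixes B :: "'i::finite \<Rightarrow> 'a set"
  assumes "N \<in> sets M" "\<And>i. B i \<in> sets M" "emeasure M N = 0" "\<And>i. emeasure M (B i) \<le> ennreal K" "0 \<le> K"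
  shows "measure M (N \<union> (\<Union>i. B i)) \<le> real CARD('i) * K"
proof -
  have "emeasure M (N \<union> (\<Union>i. B i)) \<le> emeasure M N + emeasure M (\<Union>i. B i)"
    using assms(1,2) by (intro emeasure_subadditive) auto
  also have "\<dots> = emeasure M (\<Union>i. B i)"
    using assms(3) by simp
  also have "\<dots> \<le> (\<Sum>i\<in>UNIV. emeasure M (B i))"
    using assms(2) by (intro emeasure_subadditive_finite) auto
  also have "\<dots> \<le> (\<Sum>i\<in>(UNIV :: 'i set). ennreal K)"
    using assms(4) by (intro sum_mono)
  also have "\<dots> = ennreal (real CARD('i) * K)"
    using assms(5) by (simp add: ennreal_of_nat_eq_real_of_nat ennreal_mult)
  finally show ?thesis
    using assms(5) by (simp add: measure_def enn2real_leI)
qed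

lemma sqrt_bound_le_div_power2_bound:
  fixes n m :: real
  assumes "0 \<le> n" and "0 \<le> m" and "0 < \<epsilon>" and "0 < \<sigma>" and "\<sigma> \<le> 1"
  shows "n * (\<epsilon> * sqrt m / (8 * \<sigma>)) \<le> 8 * \<epsilon> * n * (m + 1) / \<sigma>\<^sup>2"
proof -
  have "m \<le> (m + 1)\<^sup>2"
    using assms(2) mult_nonneg_nonneg[OF assms(2) assms(2)] by (simp add: power2_eq_square algebra_simps)
  then have "sqrt m \<le> m + 1"
    using assms(2) real_sqrt_le_mono[of m "(m + 1)\<^sup>2"] by simp
  moreover have "1 / \<sigma> \<le> 1 / \<sigma>\<^sup>2"
    using assms(4,5) by (simp add: power2_eq_square divide_le_eq field_simps)
  ultimately have "sqrt m * (1 / \<sigma>) \<le> (m + 1) * (1 / \<sigma>\<^sup>2)"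
    using assms by (intro mult_mono) auto
  then have "n * (\<epsilon> / 8 * (sqrt m * (1 / \<sigma>))) \<le> n * (\<epsilon> / 8 * ((m + 1) * (1 / \<sigma>\<^sup>2)))"
    using assms by (intro mult_left_mono) auto
  also have "\<dots> \<le> n * (8 * \<epsilon> * ((m + 1) * (1 / \<sigma>\<^sup>2)))"
    using assms by (intro mult_left_mono mult_right_mono) auto
  finally show ?thesis
    by (simp add: mult_ac)
qed

theorem mainTheorem5:
  fixes Abar :: "real^'n^'m" and bbar :: "real^'m" and cbar :: "real^'n"
    and \<sigma> \<epsilon> :: real
  assumes "CARD('m) \<ge> CARD('n)"
    and "spec_norm Abar \<le> 1" and "norm bbar \<le> 1" and "norm cbar \<le> 1"
    and "0 < \<sigma>" and "\<sigma>\<^sup>2 \<le> 1"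
    and "0 < \<epsilon>"
  shows "\<exists>S \<in> sets (gauss_perturb Abar bbar cbar \<sigma>).
           {(A, b, c). lp_feasible_bounded A b c \<and>
              alpha_P A b c \<le> ereal (\<epsilon> / ((spec_norm A + 2)\<^sup>2 * (norm (lp_opt A b c) + 1)))}
             \<subseteq> S \<and>
           measure (gauss_perturb Abar bbar cbar \<sigma>) S
             \<le> 8 * \<epsilon> * real CARD('n) * (real CARD('m) + 1) / \<sigma>\<^sup>2"
proof -
  let ?M = "gauss_perturb Abar bbar cbar \<sigma>"
  define N :: "((real^'n^'m) \<times> (real^'m) \<times> (real^'n)) set"
    where "N = {(A, b, c). \<exists>R k. degenerate_objective A c R k}"
  define B :: "'n \<Rightarrow> ((real^'n^'m) \<times> (real^'m) \<times> (real^'n)) set"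
    where "B j = {(A, b, c). \<exists>R. small_basic_coordinate \<epsilon> A b c R j}" for j
  have sets: "N \<in> sets ?M" "B j \<in> sets ?M" for j
    unfolding N_def B_def using \<open>0 < \<sigma>\<close>
    by (simp_all add: sets_gauss_perturb_degenerate_objective sets_gauss_perturb_small_basic_coordinate)
  have "measure ?M (N \<union> (\<Union>j. B j)) \<le> real CARD('n) * (\<epsilon> * sqrt CARD('m) / (8 * \<sigma>))"
    using sets assms(5,7) unfolding N_def B_def
    by (intro measure_null_Un_UN_le emeasure_gauss_perturb_degenerate_objective
        emeasure_gauss_perturb_small_basic_coordinate) auto
  also have "\<dots> \<le> 8 * \<epsilon> * real CARD('n) * (real CARD('m) + 1) / \<sigma>\<^sup>2"
    using assms(5-7) by (intro sqrt_bound_le_div_power2_bound) (auto simp: power_le_one_iff)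
  finally have "measure ?M (N \<union> (\<Union>j. B j)) \<le> 8 * \<epsilon> * real CARD('n) * (real CARD('m) + 1) / \<sigma>\<^sup>2" .
  moreover have "N \<union> (\<Union>j. B j) \<in> sets ?M"
    using sets by auto
  moreover have "{(A, b, c). lp_feasible_bounded A b c \<and>
      alpha_P A b c \<le> ereal (\<epsilon> / ((spec_norm A + 2)\<^sup>2 * (norm (lp_opt A b c) + 1)))} \<subseteq> N \<union> (\<Union>j. B j)"
    unfolding N_def B_def using \<open>0 < \<epsilon>\<close> by (intro lp_small_alpha_event_subset) simp
  ultimately show ?thesis
    by blast
qed

end
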